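(* Let $\varphi$ be a random homeomorphism and $N$ a random isolating block for $\varphi$ with $N(\omega)=\mathrm{cl}(\mathrm{int}N(\omega))$. Then for every sufficiently small random compact neighborhood $L$ of $N^-$ in $N$ with $L(\omega)=\mathrm{cl}(\mathrm{int}L(\omega))$, the pair $(N,L)$ is a random filtration pair for $\mathrm{Inv}N$. Moreover, there exists a random $C^0$-neighborhood of $\varphi$, i.e. a real random variable $\delta>0$, such that for every random homeomorphism $\psi$ with $d^N_{\varphi,\psi}(\omega)<\delta(\omega)$, the set $S_\psi(\omega):=\mathrm{Inv}(N(\omega)\setminus L(\omega),\psi)$ is a random isolated invariant set for $\psi$ and $(N,L)$ is a random filtration pair for $S_\psi$ (with respect to $\psi$).
   Context: Let $(\Omega,\mathscr F,\mathbb P)$ be a probability space and $\theta:\Omega\to\Omega$ an invertible bimeasurable map preserving $\mathbb P$; write $\theta_n=\theta^n$. Let $(X,d_X)$ be a locally compact separable complete metric space. A random homeomorphism is a map $\varphi:\Omega\times X\to X$ with $\varphi(\cdot,x)$ measurable for every $x$ and $\varphi(\omega,\cdot)$ a homeomorphism for every $\omega$; iterates: $\varphi^n(\omega,\cdot)=\varphi(\theta_{n-1}\omega,\cdot)\circ\cdots\circ\varphi(\omega,\cdot)$ ($n>0$), $\varphi^0=\mathrm{id}_X$, $\varphi^n(\omega,\cdot)=\varphi(\theta_n\omega,\cdot)^{-1}\circ\cdots\circ\varphi(\theta_{-1}\omega,\cdot)^{-1}$ ($n<0$); $\varphi^{-1}(\theta\omega,\cdot)=\varphi(\omega,\cdot)^{-1}$.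 A multifunction with compact values $D$ is a random compact set if $\omega\mapsto\mathrm{dist}_X(x,D(\omega))$ is measurable for each $x$. For a random set $A$ (w.r.t. $\varphi$), $\mathrm{Inv}(A,\varphi)(\omega)=\{x\in A(\omega):\varphi^n(\omega,x)\in A(\theta_n\omega)\ \forall n\in\mathbb Z\}$, also written $\mathrm{Inv}A$. A random compact set $N$ is a random isolating neighborhood if $\mathrm{Inv}N(\omega)\subset \mathrm{int}N(\omega)$; $S$ is a random isolated invariant set if $S=\mathrm{Inv}N$ for such $N$ (then $N$ is a random isolating neighborhood of $S$). $N$ is a random isolating block if $\varphi(\theta_{-1}\omega,N(\theta_{-1}\omega))\cap N(\omega)\cap\varphi^{-1}(\theta\omega,N(\theta\omega))\subset\mathrm{int}N(\omega)$. The exit set is $N^-(\omega)=\{x\in N(\omega):\varphi(\omega,x)\notin\mathrm{int}N(\theta\omega)\}$. A random neighborhood of a random set $A$ in $N$ is a random set $W\subset N$ with $A(\omega)$ in the interior of $W(\omega)$ relative to $N(\omega)$. A random filtration pair for a random isolated invariant set $S$ is a pair $(N,L)$ where $N$ is a random isolating neighborhood with $S=\mathrm{Inv}N$, $L\subset N$ is a random compact set, $N=\mathrm{cl}(\mathrm{int}N)$, $L=\mathrm{cl}(\mathrm{int}L)$, and: $\mathrm{cl}(N(\omega)\setminus L(\omega))$ is a random isolating neighborhood of $S$; $L$ is a random neighborhood of $N^-$ in $N$; and $\varphi(\omega,L(\omega))\cap\mathrm{cl}(N(\theta\omega)\setminus L(\theta\omega))=\emptyset$. For random homeomorphisms $\varphi,\psi$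 and a random compact set $N$, $d^N_{\varphi,\psi}(\omega)=\sup_{x\in N(\theta_{-1}\omega)}d_X(\varphi(\theta_{-1}\omega,x),\psi(\theta_{-1}\omega,x))+\sup_{y\in N(\theta\omega)}d_X(\varphi^{-1}(\theta\omega,y),\psi^{-1}(\theta\omega,y))$. *)

theory Defs
  imports "HOL-Probability.Probability"
begin

definition mds :: "'w measure \<Rightarrow> ('w \<Rightarrow> 'w) \<Rightarrow> bool" where
  "mds M \<theta> \<longleftrightarrow> prob_space M \<and> bij_betw \<theta> (space M) (space M)
     \<and> \<theta> \<in> measurable M M \<and> inv_into (space M) \<theta> \<in> measurable M M
     \<and> distr M M \<theta> = M"

definition theta_int :: "'w measure \<Rightarrow> ('w \<Rightarrow> 'w) \<Rightarrow> int \<Rightarrow> 'w \<Rightarrow> 'w" where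
  "theta_int M \<theta> n = (if 0 \<le> n then \<theta> ^^ nat n else inv_into (space M) \<theta> ^^ nat (- n))"

definition random_homeo :: "'w measure \<Rightarrow> ('w \<Rightarrow> 'x::topological_space \<Rightarrow> 'x) \<Rightarrow> bool" where
  "random_homeo M \<phi> \<longleftrightarrow> (\<forall>x. (\<lambda>\<omega>. \<phi> \<omega> x) \<in> borel_measurable M)
     \<and> (\<forall>\<omega>\<in>space M. \<exists>g. homeomorphism UNIV UNIV (\<phi> \<omega>) g)"

fun phi_pos :: "('w \<Rightarrow> 'w) \<Rightarrow> ('w \<Rightarrow> 'x \<Rightarrow> 'x) \<Rightarrow> nat \<Rightarrow> 'w \<Rightarrow> 'x \<Rightarrow> 'x" where
  "phi_pos \<theta> \<phi> 0 \<omega> = id"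
| "phi_pos \<theta> \<phi> (Suc n) \<omega> = \<phi> ((\<theta> ^^ n) \<omega>) \<circ> phi_pos \<theta> \<phi> n \<omega>"

fun phi_neg :: "'w measure \<Rightarrow> ('w \<Rightarrow> 'w) \<Rightarrow> ('w \<Rightarrow> 'x \<Rightarrow> 'x) \<Rightarrow> nat \<Rightarrow> 'w \<Rightarrow> 'x \<Rightarrow> 'x" where
  "phi_neg M \<theta> \<phi> 0 \<omega> = id"
| "phi_neg M \<theta> \<phi> (Suc n) \<omega> =
     inv (\<phi> (theta_int M \<theta> (- (int n + 1)) \<omega>)) \<circ> phi_neg M \<theta> \<phi> n \<omega>"

definition phi_int :: "'w measure \<Rightarrow> ('w \<Rightarrow> 'w) \<Rightarrow> ('w \<Rightarrow> 'x \<Rightarrow> 'x) \<Rightarrow> int \<Rightarrow> 'w \<Rightarrow> 'x \<Rightarrow> 'x" where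
  "phi_int M \<theta> \<phi> n = (if 0 \<le> n then phi_pos \<theta> \<phi> (nat n) else phi_neg M \<theta> \<phi> (nat (- n)))"

definition random_compact :: "'w measure \<Rightarrow> ('w \<Rightarrow> 'x::metric_space set) \<Rightarrow> bool" where
  "random_compact M D \<longleftrightarrow> (\<forall>\<omega>\<in>space M. compact (D \<omega>))
     \<and> (\<forall>x. (\<lambda>\<omega>. if D \<omega> = {} then (\<infinity>::ereal) else ereal (infdist x (D \<omega>))) \<in> borel_measurable M)"

definition Inv :: "'w measure \<Rightarrow> ('w \<Rightarrow> 'w) \<Rightarrow> ('w \<Rightarrow> 'x \<Rightarrow> 'x) \<Rightarrow> ('w \<Rightarrow> 'x set) \<Rightarrow> 'w \<Rightarrow> 'x set" where
  "Inv M \<theta> \<phi> A \<omega> = {x \<in> A \<omega>. \<forall>n::int. phi_int M \<theta> \<phi> n \<omega> x \<in> A (theta_int M \<theta> n \<omega>)}"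

definition random_isol_nbhd :: "'w measure \<Rightarrow> ('w \<Rightarrow> 'w) \<Rightarrow> ('w \<Rightarrow> 'x::metric_space \<Rightarrow> 'x) \<Rightarrow> ('w \<Rightarrow> 'x set) \<Rightarrow> bool" where
  "random_isol_nbhd M \<theta> \<phi> N \<longleftrightarrow> random_compact M N
     \<and> (\<forall>\<omega>\<in>space M. Inv M \<theta> \<phi> N \<omega> \<subseteq> interior (N \<omega>))"

definition random_isol_inv_set :: "'w measure \<Rightarrow> ('w \<Rightarrow> 'w) \<Rightarrow> ('w \<Rightarrow> 'x::metric_space \<Rightarrow> 'x) \<Rightarrow> ('w \<Rightarrow> 'x set) \<Rightarrow> bool" where
  "random_isol_inv_set M \<theta> \<phi> S \<longleftrightarrow>
     (\<exists>N. random_isol_nbhd M \<theta> \<phi> N \<and> (\<forall>\<omega>\<in>space M. S \<omega> = Inv M \<theta> \<phi> N \<omega>))"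

definition random_isol_block :: "'w measure \<Rightarrow> ('w \<Rightarrow> 'w) \<Rightarrow> ('w \<Rightarrow> 'x::metric_space \<Rightarrow> 'x) \<Rightarrow> ('w \<Rightarrow> 'x set) \<Rightarrow> bool" where
  "random_isol_block M \<theta> \<phi> N \<longleftrightarrow> random_compact M N
     \<and> (\<forall>\<omega>\<in>space M.
          \<phi> (theta_int M \<theta> (-1) \<omega>) ` N (theta_int M \<theta> (-1) \<omega>) \<inter> N \<omega>
            \<inter> phi_int M \<theta> \<phi> (-1) (\<theta> \<omega>) ` N (\<theta> \<omega>) \<subseteq> interior (N \<omega>))"

definition exit_set :: "('w \<Rightarrow> 'w) \<Rightarrow> ('w \<Rightarrow> 'x::topological_space \<Rightarrow> 'x) \<Rightarrow> ('w \<Rightarrow> 'x set) \<Rightarrow> 'w \<Rightarrow> 'x set" where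
  "exit_set \<theta> \<phi> N \<omega> = {x \<in> N \<omega>. \<phi> \<omega> x \<notin> interior (N (\<theta> \<omega>))}"

definition rel_nbhd :: "'w measure \<Rightarrow> ('w \<Rightarrow> 'x::topological_space set) \<Rightarrow> ('w \<Rightarrow> 'x set) \<Rightarrow> ('w \<Rightarrow> 'x set) \<Rightarrow> bool" where
  "rel_nbhd M W A N \<longleftrightarrow> (\<forall>\<omega>\<in>space M. W \<omega> \<subseteq> N \<omega>
      \<and> A \<omega> \<subseteq> (top_of_set (N \<omega>)) interior_of (W \<omega>))"

definition filtration_pair :: "'w measure \<Rightarrow> ('w \<Rightarrow> 'w) \<Rightarrow> ('w \<Rightarrow> 'x::metric_space \<Rightarrow> 'x)
    \<Rightarrow> ('w \<Rightarrow> 'x set) \<Rightarrow> ('w \<Rightarrow> 'x set) \<Rightarrow> ('w \<Rightarrow> 'x set) \<Rightarrow> bool" where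
  "filtration_pair M \<theta> \<phi> N L S \<longleftrightarrow>
     random_isol_nbhd M \<theta> \<phi> N \<and> (\<forall>\<omega>\<in>space M. S \<omega> = Inv M \<theta> \<phi> N \<omega>)
     \<and> random_compact M L \<and> (\<forall>\<omega>\<in>space M. L \<omega> \<subseteq> N \<omega>)
     \<and> (\<forall>\<omega>\<in>space M. N \<omega> = closure (interior (N \<omega>)) \<and> L \<omega> = closure (interior (L \<omega>)))
     \<and> random_isol_nbhd M \<theta> \<phi> (\<lambda>\<omega>. closure (N \<omega> - L \<omega>))
     \<and> (\<forall>\<omega>\<in>space M. S \<omega> = Inv M \<theta> \<phi> (\<lambda>\<omega>. closure (N \<omega> - L \<omega>)) \<omega>)
     \<and> rel_nbhd M L (exit_set \<theta> \<phi> N) N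
     \<and> (\<forall>\<omega>\<in>space M. \<phi> \<omega> ` L \<omega> \<inter> closure (N (\<theta> \<omega>) - L (\<theta> \<omega>)) = {})"

text \<open>The distance d^N_{phi,psi}; suprema over empty sets are taken to be 0 (distances are nonnegative).\<close>
definition dN :: "'w measure \<Rightarrow> ('w \<Rightarrow> 'w) \<Rightarrow> ('w \<Rightarrow> 'x set) \<Rightarrow> ('w \<Rightarrow> 'x::metric_space \<Rightarrow> 'x)
    \<Rightarrow> ('w \<Rightarrow> 'x \<Rightarrow> 'x) \<Rightarrow> 'w \<Rightarrow> real" where
  "dN M \<theta> N \<phi> \<psi> \<omega> =
     Sup (insert 0 ((\<lambda>x. dist (\<phi> (theta_int M \<theta> (-1) \<omega>) x) (\<psi> (theta_int M \<theta> (-1) \<omega>) x))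
                     ` N (theta_int M \<theta> (-1) \<omega>)))
   + Sup (insert 0 ((\<lambda>y. dist (phi_int M \<theta> \<phi> (-1) (\<theta> \<omega>) y) (phi_int M \<theta> \<psi> (-1) (\<theta> \<omega>) y))
                     ` N (\<theta> \<omega>)))"

end

theory Submission
  imports Defs
begin

(* Everything reduces to conditions on two consecutive steps of the cocycle. If at every \<omega>
   the maps h \<omega> and h (\<theta> \<omega>) have the block property on N, send no point of L twice into N,
   map closure (N - L) into the interior of N and map L away from closure (N - L), then (N, L)
   is a filtration pair for h and Inv (N - L) = Inv N.
   For \<phi> these conditions follow from the isolating block as soon as L lies within \<epsilon> of the
   exit set, where \<epsilon> separates the exit set from the points that stay in N for two steps.
   Each condition says that a continuous function is positive on a compact random set, so it
   survives C0-perturbations below a positive margin; the margins and \<epsilon> are measurable since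
   such minima can be computed along a countable dense sequence. Finally d^N at \<theta> \<omega> and at
   \<theta> (\<theta> \<omega>) controls the perturbation of the two steps starting at \<omega>. *)

section \<open>Iterates of the cocycle and invariant parts\<close>

lemma mds_theta_in_space: "mds M \<theta> \<Longrightarrow> \<omega> \<in> space M \<Longrightarrow> \<theta> \<omega> \<in> space M"
  unfolding mds_def by (meson bij_betwE)

lemma mds_inv_in_space: "mds M \<theta> \<Longrightarrow> \<omega> \<in> space M \<Longrightarrow> inv_into (space M) \<theta> \<omega> \<in> space M"
  unfolding mds_def by (metis bij_betw_def inv_into_into)

lemma mds_inv_theta: "mds M \<theta> \<Longrightarrow> \<omega> \<in> space M \<Longrightarrow> inv_into (space M) \<theta> (\<theta> \<omega>) = \<omega>"
  unfolding mds_def by (meson bij_betw_inv_into_left)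

lemma mds_theta_inv: "mds M \<theta> \<Longrightarrow> \<omega> \<in> space M \<Longrightarrow> \<theta> (inv_into (space M) \<theta> \<omega>) = \<omega>"
  unfolding mds_def by (meson bij_betw_inv_into_right)

lemma measurable_mds_theta: "mds M \<theta> \<Longrightarrow> \<theta> \<in> M \<rightarrow>\<^sub>M M"
  unfolding mds_def by blast

lemma measurable_mds_inv: "mds M \<theta> \<Longrightarrow> inv_into (space M) \<theta> \<in> M \<rightarrow>\<^sub>M M"
  unfolding mds_def by blast

lemma theta_int_in_space:
  assumes "mds M \<theta>" "\<omega> \<in> space M"
  shows "theta_int M \<theta> n \<omega> \<in> space M"
proof -
  have "(f ^^ k) \<omega> \<in> space M" if "\<And>\<omega>. \<omega> \<in> space M \<Longrightarrow> f \<omega> \<in> space M" for f k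
    using that assms(2) by (induction k) auto
  then show ?thesis
    using mds_theta_in_space[OF assms(1)] mds_inv_in_space[OF assms(1)]
    unfolding theta_int_def by simp
qed

lemma theta_int_0 [simp]: "theta_int M \<theta> 0 \<omega> = \<omega>"
  by (simp add: theta_int_def)

lemma phi_int_0 [simp]: "phi_int M \<theta> h 0 \<omega> = id"
  by (simp add: phi_int_def)

lemma theta_int_minus_one [simp]: "theta_int M \<theta> (-1) = inv_into (space M) \<theta>"
  by (simp add: theta_int_def)

lemma theta_int_uminus: "theta_int M \<theta> (- int k) = inv_into (space M) \<theta> ^^ k"
  by (cases "k = 0") (simp_all add: theta_int_def)

lemma phi_int_uminus: "phi_int M \<theta> h (- int k) = phi_neg M \<theta> h k"
  by (cases "k = 0") (simp_all add: phi_int_def fun_eq_iff)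

(* phi_neg recurses through -(k + 1), so negative times are written in this form. *)
lemma theta_int_minus_Suc: "theta_int M \<theta> (- (int k + 1)) = inv_into (space M) \<theta> ^^ Suc k"
  by (simp add: theta_int_def nat_add_distrib)

lemma phi_int_minus_Suc: "phi_int M \<theta> h (- (int k + 1)) = phi_neg M \<theta> h (Suc k)"
  by (simp add: phi_int_def nat_add_distrib)

lemma theta_int_succ:
  assumes "mds M \<theta>" "\<omega> \<in> space M"
  shows "theta_int M \<theta> (n + 1) \<omega> = \<theta> (theta_int M \<theta> n \<omega>)"
proof (cases "0 \<le> n")
  case True
  then show ?thesis by (simp add: theta_int_def nat_add_distrib)
next
  case False
  then have "\<exists>k. n = - (int k + 1)" by presburger
  then obtain k where n: "n = - (int k + 1)" by blast
  have n1: "n + 1 = - int k" using n by simp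
  have "(inv_into (space M) \<theta> ^^ k) \<omega> \<in> space M"
    using theta_int_in_space[OF assms, of "- int k"] by (simp add: theta_int_uminus)
  then show ?thesis
    unfolding n1 unfolding n theta_int_minus_Suc theta_int_uminus
    using mds_theta_inv[OF assms(1)] by simp
qed

lemma random_homeo_homeomorphism:
  assumes "random_homeo M h" "\<omega> \<in> space M"
  shows "homeomorphism UNIV UNIV (h \<omega>) (inv (h \<omega>))"
proof -
  obtain g where g: "homeomorphism UNIV UNIV (h \<omega>) g"
    using assms unfolding random_homeo_def by blast
  then have "inv (h \<omega>) = g"
    by (intro inv_equality) (simp_all add: homeomorphism_apply1 homeomorphism_apply2)
  then show ?thesis using g by simp
qed

lemma random_homeo_f_inv_f:
  assumes "random_homeo M h" "\<omega> \<in> space M" shows "h \<omega> (inv (h \<omega>) y) = y"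
  using homeomorphism_apply2[OF random_homeo_homeomorphism[OF assms]] by simp

lemma random_homeo_inv_f_f:
  assumes "random_homeo M h" "\<omega> \<in> space M" shows "inv (h \<omega>) (h \<omega> x) = x"
  using homeomorphism_apply1[OF random_homeo_homeomorphism[OF assms]] by simp

lemma random_homeo_continuous_on:
  assumes "random_homeo M h" "\<omega> \<in> space M" shows "continuous_on S (h \<omega>)"
  using homeomorphism_cont1[OF random_homeo_homeomorphism[OF assms]] by (rule continuous_on_subset) simp

lemma random_homeo_inv_continuous_on:
  assumes "random_homeo M h" "\<omega> \<in> space M" shows "continuous_on S (inv (h \<omega>))"
  using homeomorphism_cont2[OF random_homeo_homeomorphism[OF assms]] by (rule continuous_on_subset) simp

lemma phi_int_succ:
  assumes "mds M \<theta>" "random_homeo M h" "\<omega> \<in> space M"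
  shows "phi_int M \<theta> h (n + 1) \<omega> x = h (theta_int M \<theta> n \<omega>) (phi_int M \<theta> h n \<omega> x)"
proof (cases "0 \<le> n")
  case True
  then show ?thesis by (simp add: phi_int_def theta_int_def nat_add_distrib)
next
  case False
  then have "\<exists>k. n = - (int k + 1)" by presburger
  then obtain k where n: "n = - (int k + 1)" by blast
  have n1: "n + 1 = - int k" using n by simp
  have "h (theta_int M \<theta> n \<omega>) (inv (h (theta_int M \<theta> n \<omega>)) y) = y" for y
    using random_homeo_f_inv_f[OF assms(2) theta_int_in_space[OF assms(1,3)]] .
  then show ?thesis
    unfolding n1 unfolding n phi_int_minus_Suc phi_int_uminus phi_neg.simps comp_apply
    by (rule sym)
qed

lemma phi_int_minus_one_theta:
  "mds M \<theta> \<Longrightarrow> \<omega> \<in> space M \<Longrightarrow> phi_int M \<theta> h (-1) (\<theta> \<omega>) = inv (h \<omega>)"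
  by (simp add: phi_int_def mds_inv_theta)

lemma Inv_mono:
  assumes "mds M \<theta>" "\<omega> \<in> space M" "\<And>\<omega>. \<omega> \<in> space M \<Longrightarrow> A \<omega> \<subseteq> B \<omega>"
  shows "Inv M \<theta> h A \<omega> \<subseteq> Inv M \<theta> h B \<omega>"
  using assms theta_int_in_space[OF assms(1,2)] unfolding Inv_def by blast

lemma Inv_two_steps:
  fixes n :: int
  assumes "mds M \<theta>" "random_homeo M h" "\<omega> \<in> space M" "x \<in> Inv M \<theta> h A \<omega>"
  defines "\<omega>' \<equiv> theta_int M \<theta> n \<omega>" and "y \<equiv> phi_int M \<theta> h n \<omega> x"
  shows "y \<in> A \<omega>'" "h \<omega>' y \<in> A (\<theta> \<omega>')" "h (\<theta> \<omega>') (h \<omega>' y) \<in> A (\<theta> (\<theta> \<omega>'))"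
proof -
  note orbit = assms(4)[unfolded Inv_def, THEN CollectD, THEN conjunct2, rule_format]
  note theta_succ = theta_int_succ[OF assms(1,3)] and phi_succ = phi_int_succ[OF assms(1-3)]
  show "y \<in> A \<omega>'" using orbit[of n] unfolding y_def \<omega>'_def .
  show "h \<omega>' y \<in> A (\<theta> \<omega>')"
    using orbit[of "n + 1"] unfolding y_def \<omega>'_def theta_succ phi_succ .
  show "h (\<theta> \<omega>') (h \<omega>' y) \<in> A (\<theta> (\<theta> \<omega>'))"
    using orbit[of "n + 1 + 1"] unfolding y_def \<omega>'_def theta_succ phi_succ .
qed

lemma Inv_Diff_eq_Inv:
  assumes "mds M \<theta>" "random_homeo M h" "\<omega> \<in> space M"
    and leave: "\<And>\<omega> x. \<omega> \<in> space M \<Longrightarrow> x \<in> L \<omega> \<Longrightarrow> h \<omega> x \<in> N (\<theta> \<omega>)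
      \<Longrightarrow> h (\<theta> \<omega>) (h \<omega> x) \<notin> N (\<theta> (\<theta> \<omega>))"
  shows "Inv M \<theta> h (\<lambda>\<omega>. N \<omega> - L \<omega>) \<omega> = Inv M \<theta> h N \<omega>"
proof
  show "Inv M \<theta> h (\<lambda>\<omega>. N \<omega> - L \<omega>) \<omega> \<subseteq> Inv M \<theta> h N \<omega>"
    by (rule Inv_mono[OF assms(1,3)]) blast
  show "Inv M \<theta> h N \<omega> \<subseteq> Inv M \<theta> h (\<lambda>\<omega>. N \<omega> - L \<omega>) \<omega>"
  proof
    fix x assume x: "x \<in> Inv M \<theta> h N \<omega>"
    have not_L: "phi_int M \<theta> h n \<omega> x \<notin> L (theta_int M \<theta> n \<omega>)" for n
      using leave[OF theta_int_in_space[OF assms(1,3)]] Inv_two_steps[OF assms(1-3) x, of n] by blast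
    then show "x \<in> Inv M \<theta> h (\<lambda>\<omega>. N \<omega> - L \<omega>) \<omega>"
      using x not_L[of 0] unfolding Inv_def by simp
  qed
qed

lemma Inv_subset_interior:
  assumes "mds M \<theta>" "random_homeo M h" "\<omega> \<in> space M"
    and block: "\<And>\<omega> x. \<omega> \<in> space M \<Longrightarrow> x \<in> N \<omega> \<Longrightarrow> h \<omega> x \<in> N (\<theta> \<omega>)
      \<Longrightarrow> h (\<theta> \<omega>) (h \<omega> x) \<in> N (\<theta> (\<theta> \<omega>)) \<Longrightarrow> h \<omega> x \<in> interior (N (\<theta> \<omega>))"
  shows "Inv M \<theta> h N \<omega> \<subseteq> interior (N \<omega>)"
proof
  fix x assume x: "x \<in> Inv M \<theta> h N \<omega>"
  define \<omega>' where "\<omega>' = theta_int M \<theta> (-1) \<omega>"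
  have "\<omega>' \<in> space M" unfolding \<omega>'_def by (rule theta_int_in_space[OF assms(1,3)])
  then have "h \<omega>' (phi_int M \<theta> h (-1) \<omega> x) \<in> interior (N (\<theta> \<omega>'))"
    by (rule block[OF _ Inv_two_steps[OF assms(1-3) x, of "-1", folded \<omega>'_def]])
  moreover have "\<theta> \<omega>' = \<omega>"
    unfolding \<omega>'_def using mds_theta_inv[OF assms(1,3)] by simp
  moreover have "h \<omega>' (phi_int M \<theta> h (-1) \<omega> x) = x"
    using phi_int_succ[OF assms(1-3), of "-1" x] unfolding \<omega>'_def by simp
  ultimately show "x \<in> interior (N \<omega>)" by simp
qed

lemma random_isol_block_two_step:
  assumes "mds M \<theta>" "random_homeo M h" "random_isol_block M \<theta> h N" "\<omega> \<in> space M"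
    and "x \<in> N \<omega>" "h \<omega> x \<in> N (\<theta> \<omega>)" "h (\<theta> \<omega>) (h \<omega> x) \<in> N (\<theta> (\<theta> \<omega>))"
  shows "h \<omega> x \<in> interior (N (\<theta> \<omega>))"
proof -
  have \<omega>1: "\<theta> \<omega> \<in> space M" by (rule mds_theta_in_space[OF assms(1,4)])
  have "h (theta_int M \<theta> (-1) (\<theta> \<omega>)) ` N (theta_int M \<theta> (-1) (\<theta> \<omega>)) \<inter> N (\<theta> \<omega>)
      \<inter> phi_int M \<theta> h (-1) (\<theta> (\<theta> \<omega>)) ` N (\<theta> (\<theta> \<omega>)) \<subseteq> interior (N (\<theta> \<omega>))"
    using assms(3) \<omega>1 unfolding random_isol_block_def by blast
  then have block: "h \<omega> ` N \<omega> \<inter> N (\<theta> \<omega>) \<inter> inv (h (\<theta> \<omega>)) ` N (\<theta> (\<theta> \<omega>))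
      \<subseteq> interior (N (\<theta> \<omega>))"
    by (simp add: mds_inv_theta[OF assms(1,4)] phi_int_minus_one_theta[OF assms(1) \<omega>1])
  have "h \<omega> x \<in> inv (h (\<theta> \<omega>)) ` N (\<theta> (\<theta> \<omega>))"
    by (rule image_eqI[where x = "h (\<theta> \<omega>) (h \<omega> x)"])
      (simp_all add: random_homeo_inv_f_f[OF assms(2) \<omega>1] assms(7))
  with imageI[OF assms(5)] assms(6)
  have "h \<omega> x \<in> h \<omega> ` N \<omega> \<inter> N (\<theta> \<omega>) \<inter> inv (h (\<theta> \<omega>)) ` N (\<theta> (\<theta> \<omega>))"
    by (intro IntI)
  then show ?thesis using block by (rule rev_subsetD)
qed

section \<open>Random open sets\<close>

definition dense_seq :: "nat \<Rightarrow> 'a::second_countable_topology" where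
  "dense_seq = from_nat_into (SOME D. countable D \<and> (\<forall>X. open X \<longrightarrow> X \<noteq> {} \<longrightarrow> (\<exists>d\<in>D. d \<in> X)))"

lemma dense_seq_in_open:
  assumes "open U" "U \<noteq> {}"
  obtains i where "dense_seq i \<in> U"
proof -
  let ?D = "SOME D::'a set. countable D \<and> (\<forall>X. open X \<longrightarrow> X \<noteq> {} \<longrightarrow> (\<exists>d\<in>D. d \<in> X))"
  have D: "countable ?D" "\<And>X. open X \<Longrightarrow> X \<noteq> {} \<Longrightarrow> \<exists>d\<in>?D. d \<in> X"
    using someI_ex[OF countable_dense_exists] by blast+
  then have "range dense_seq = ?D"
    unfolding dense_seq_def by (intro range_from_nat_into) auto
  then show ?thesis using D(2)[OF assms] that by (metis rangeE)
qed

lemma open_eq_empty_iff_dense_seq: "open U \<Longrightarrow> U = {} \<longleftrightarrow> (\<forall>i. dense_seq i \<notin> U)"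
  using dense_seq_in_open by blast

lemma closure_dense_seq:
  fixes U :: "'a::{metric_space, second_countable_topology} set"
  assumes "open U"
  shows "closure (dense_seq ` {i. dense_seq i \<in> U}) = closure U"
proof
  show "closure (dense_seq ` {i. dense_seq i \<in> U}) \<subseteq> closure U"
    by (rule closure_mono) blast
  have "U \<subseteq> closure (dense_seq ` {i. dense_seq i \<in> U})"
  proof
    fix x assume "x \<in> U"
    show "x \<in> closure (dense_seq ` {i. dense_seq i \<in> U})"
    proof (rule closure_approachable[THEN iffD2], intro allI impI)
      fix e :: real assume "0 < e"
      then obtain i where "dense_seq i \<in> ball x e \<inter> U"
        using dense_seq_in_open[of "ball x e \<inter> U"] \<open>x \<in> U\<close> assms by (metis centre_in_ball empty_iff
            IntI open_Int open_ball)
      then show "\<exists>y\<in>dense_seq ` {i. dense_seq i \<in> U}. dist y x < e"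
        by (auto simp: dist_commute)
    qed
  qed
  then show "closure U \<subseteq> closure (dense_seq ` {i. dense_seq i \<in> U})"
    by (simp add: closure_minimal)
qed

lemma infdist_closure: "infdist x (closure A) = infdist x A"
  by (simp add: infdist_eq_setdist)

lemma infdist_open_less_iff:
  fixes U :: "'a::{metric_space, second_countable_topology} set"
  assumes "open U"
  shows "infdist y U < a \<longleftrightarrow>
    ((\<forall>i. dense_seq i \<notin> U) \<and> 0 < a) \<or> (\<exists>i. dense_seq i \<in> U \<and> dist y (dense_seq i) < a)"
proof (cases "U = {}")
  case True
  then show ?thesis by (simp add: infdist_def)
next
  case False
  have "infdist y U < a \<longleftrightarrow> (\<exists>u\<in>U. dist y u < a)"
  proof
    assume less: "infdist y U < a"
    show "\<exists>u\<in>U. dist y u < a"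
    proof (rule ccontr)
      assume "\<not> (\<exists>u\<in>U. dist y u < a)"
      then have "a \<le> infdist y U"
        unfolding infdist_notempty[OF False] by (intro cINF_greatest False) (simp add: not_less)
      then show False using less by simp
    qed
  qed (use infdist_le le_less_trans in blast)
  also have "\<dots> \<longleftrightarrow> (\<exists>i. dense_seq i \<in> U \<and> dist y (dense_seq i) < a)"
  proof
    assume "\<exists>u\<in>U. dist y u < a"
    then have "ball y a \<inter> U \<noteq> {}" by (metis IntI dist_commute empty_iff mem_ball)
    then obtain i where "dense_seq i \<in> ball y a \<inter> U"
      using dense_seq_in_open[of "ball y a \<inter> U"] assms by blast
    then show "\<exists>i. dense_seq i \<in> U \<and> dist y (dense_seq i) < a" by auto
  qed blast
  finally show ?thesis using False open_eq_empty_iff_dense_seq[OF assms] by blast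
qed

lemma pred_cong_space:
  assumes "Measurable.pred M P" "\<And>\<omega>. \<omega> \<in> space M \<Longrightarrow> P \<omega> \<longleftrightarrow> Q \<omega>"
  shows "Measurable.pred M Q"
proof -
  have "{\<omega> \<in> space M. Q \<omega>} = {\<omega> \<in> space M. P \<omega>}" using assms(2) by blast
  then show ?thesis using assms(1) by (simp add: pred_def)
qed

(* Only membership of single points is required to be measurable; for open values this already
   makes emptiness and distances measurable, by infdist_open_less_iff. *)
definition random_open :: "'w measure \<Rightarrow> ('w \<Rightarrow> 'x::topological_space set) \<Rightarrow> bool" where
  "random_open M U \<longleftrightarrow> (\<forall>\<omega>\<in>space M. open (U \<omega>)) \<and> (\<forall>x. Measurable.pred M (\<lambda>\<omega>. x \<in> U \<omega>))"

lemma random_open_open: "random_open M U \<Longrightarrow> \<omega> \<in> space M \<Longrightarrow> open (U \<omega>)"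
  unfolding random_open_def by blast

lemma random_open_pred_mem: "random_open M U \<Longrightarrow> Measurable.pred M (\<lambda>\<omega>. x \<in> U \<omega>)"
  unfolding random_open_def by blast

lemma random_open_pred_empty:
  fixes U :: "'w \<Rightarrow> 'x::second_countable_topology set"
  assumes "random_open M U"
  shows "Measurable.pred M (\<lambda>\<omega>. U \<omega> = {})"
proof (rule pred_cong_space)
  have [measurable]: "\<And>x. Measurable.pred M (\<lambda>\<omega>. x \<in> U \<omega>)" by (rule random_open_pred_mem[OF assms])
  show "Measurable.pred M (\<lambda>\<omega>. \<forall>i. dense_seq i \<notin> U \<omega>)" by measurable
qed (simp add: open_eq_empty_iff_dense_seq random_open_open[OF assms])

lemma measurable_infdist_random_open:
  fixes U :: "'w \<Rightarrow> 'x::{metric_space, second_countable_topology} set"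
  assumes "random_open M U" "y \<in> borel_measurable M"
  shows "(\<lambda>\<omega>. infdist (y \<omega>) (U \<omega>)) \<in> borel_measurable M"
  unfolding borel_measurable_iff_less
proof
  fix a :: real
  have [measurable]: "\<And>x. Measurable.pred M (\<lambda>\<omega>. x \<in> U \<omega>)" "y \<in> borel_measurable M"
    using assms by (auto intro: random_open_pred_mem)
  have "Measurable.pred M (\<lambda>\<omega>. ((\<forall>i. dense_seq i \<notin> U \<omega>) \<and> 0 < a)
      \<or> (\<exists>i. dense_seq i \<in> U \<omega> \<and> dist (y \<omega>) (dense_seq i) < a))"
    by measurable
  then have "Measurable.pred M (\<lambda>\<omega>. infdist (y \<omega>) (U \<omega>) < a)"
    by (rule pred_cong_space) (simp add: infdist_open_less_iff random_open_open[OF assms(1)])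
  then show "{\<omega> \<in> space M. infdist (y \<omega>) (U \<omega>) < a} \<in> sets M" by simp
qed

lemma random_compact_pred_mem:
  fixes A :: "'w \<Rightarrow> 'x::metric_space set"
  assumes "random_compact M A"
  shows "Measurable.pred M (\<lambda>\<omega>. x \<in> A \<omega>)"
proof (rule pred_cong_space)
  have [measurable]: "(\<lambda>\<omega>. if A \<omega> = {} then \<infinity> else ereal (infdist x (A \<omega>))) \<in> borel_measurable M"
    using assms unfolding random_compact_def by blast
  show "Measurable.pred M (\<lambda>\<omega>. (if A \<omega> = {} then \<infinity> else ereal (infdist x (A \<omega>))) = 0)"
    by measurable
  fix \<omega> assume "\<omega> \<in> space M"
  then have "closed (A \<omega>)" using assms unfolding random_compact_def by (simp add: compact_imp_closed)
  then show "(if A \<omega> = {} then \<infinity> else ereal (infdist x (A \<omega>))) = 0 \<longleftrightarrow> x \<in> A \<omega>"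
    by (simp add: in_closed_iff_infdist_zero zero_ereal_def)
qed

lemma random_open_Compl:
  fixes A :: "'w \<Rightarrow> 'x::metric_space set"
  assumes "random_compact M A"
  shows "random_open M (\<lambda>\<omega>. - A \<omega>)"
  using assms random_compact_pred_mem[OF assms] unfolding random_open_def random_compact_def
  by (auto intro: compact_imp_closed)

lemma random_open_Diff:
  fixes A :: "'w \<Rightarrow> 'x::metric_space set"
  assumes "random_open M U" "random_compact M A"
  shows "random_open M (\<lambda>\<omega>. U \<omega> - A \<omega>)"
  unfolding random_open_def
proof (intro conjI ballI allI)
  show "open (U \<omega> - A \<omega>)" if "\<omega> \<in> space M" for \<omega>
    using assms that unfolding random_open_def random_compact_def by (simp add: compact_imp_closed open_Diff)
  have [measurable]: "\<And>x. Measurable.pred M (\<lambda>\<omega>. x \<in> U \<omega>)" "\<And>x. Measurable.pred M (\<lambda>\<omega>. x \<in> A \<omega>)"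
    using assms by (auto intro: random_open_pred_mem random_compact_pred_mem)
  show "Measurable.pred M (\<lambda>\<omega>. x \<in> U \<omega> - A \<omega>)" for x by measurable
qed

lemma random_open_interior:
  fixes A :: "'w \<Rightarrow> 'x::{metric_space, second_countable_topology} set"
  assumes "random_compact M A"
  shows "random_open M (\<lambda>\<omega>. interior (A \<omega>))"
  unfolding random_open_def
proof (intro conjI ballI allI open_interior)
  fix x
  note Compl = random_open_Compl[OF assms]
  have [measurable]: "Measurable.pred M (\<lambda>\<omega>. - A \<omega> = {})"
    "(\<lambda>\<omega>. infdist x (- A \<omega>)) \<in> borel_measurable M"
    by (rule random_open_pred_empty[OF Compl], rule measurable_infdist_random_open[OF Compl]) simp
  have "Measurable.pred M (\<lambda>\<omega>. - A \<omega> = {} \<or> 0 < infdist x (- A \<omega>))" by measurable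
  then show "Measurable.pred M (\<lambda>\<omega>. x \<in> interior (A \<omega>))"
  proof (rule pred_cong_space)
    fix \<omega>
    have "x \<in> closure (- A \<omega>) \<longleftrightarrow> - A \<omega> \<noteq> {} \<and> infdist x (- A \<omega>) = 0"
      by (cases "- A \<omega> = {}") (simp_all add: in_closure_iff_infdist_zero)
    then show "- A \<omega> = {} \<or> 0 < infdist x (- A \<omega>) \<longleftrightarrow> x \<in> interior (A \<omega>)"
      using infdist_nonneg[of x "- A \<omega>"] by (auto simp: interior_closure)
  qed
qed

lemma random_open_Times:
  assumes "random_open M U" "random_open M V"
  shows "random_open M (\<lambda>\<omega>. U \<omega> \<times> V \<omega>)"
  unfolding random_open_def
proof (intro conjI ballI allI)
  show "open (U \<omega> \<times> V \<omega>)" if "\<omega> \<in> space M" for \<omega>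
    using assms that by (simp add: random_open_open open_Times)
  have [measurable]: "\<And>x. Measurable.pred M (\<lambda>\<omega>. x \<in> U \<omega>)" "\<And>x. Measurable.pred M (\<lambda>\<omega>. x \<in> V \<omega>)"
    using assms by (auto intro: random_open_pred_mem)
  show "Measurable.pred M (\<lambda>\<omega>. p \<in> U \<omega> \<times> V \<omega>)" for p
    unfolding mem_Times_iff by measurable
qed

lemma random_open_UNIV: "random_open M (\<lambda>\<omega>. UNIV)"
  unfolding random_open_def by simp

lemma random_open_compose:
  assumes "random_open M U" "f \<in> M \<rightarrow>\<^sub>M M"
  shows "random_open M (\<lambda>\<omega>. U (f \<omega>))"
  unfolding random_open_def
proof (intro conjI ballI allI)
  show "open (U (f \<omega>))" if "\<omega> \<in> space M" for \<omega>
    using random_open_open[OF assms(1) measurable_space[OF assms(2) that]] .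
  have [measurable]: "\<And>x. Measurable.pred M (\<lambda>\<omega>. x \<in> U \<omega>)" "f \<in> M \<rightarrow>\<^sub>M M"
    using assms by (auto intro: random_open_pred_mem)
  show "Measurable.pred M (\<lambda>\<omega>. x \<in> U (f \<omega>))" for x by measurable
qed

lemma random_compact_closure:
  fixes U :: "'w \<Rightarrow> 'x::{metric_space, second_countable_topology} set"
  assumes "random_open M U" "\<And>\<omega>. \<omega> \<in> space M \<Longrightarrow> compact (closure (U \<omega>))"
  shows "random_compact M (\<lambda>\<omega>. closure (U \<omega>))"
  unfolding random_compact_def
proof (intro conjI ballI allI assms(2))
  fix x
  have [measurable]: "Measurable.pred M (\<lambda>\<omega>. U \<omega> = {})"
    "(\<lambda>\<omega>. infdist x (U \<omega>)) \<in> borel_measurable M"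
    by (rule random_open_pred_empty[OF assms(1)], rule measurable_infdist_random_open[OF assms(1)]) simp
  have "(\<lambda>\<omega>. if U \<omega> = {} then \<infinity> else ereal (infdist x (U \<omega>))) \<in> borel_measurable M"
    by measurable
  then show "(\<lambda>\<omega>. if closure (U \<omega>) = {} then \<infinity> else ereal (infdist x (closure (U \<omega>))))
      \<in> borel_measurable M"
    by (simp add: infdist_closure cong: if_cong)
qed

lemma closure_interior_Diff:
  assumes "N = closure (interior N)" "closed L"
  shows "closure (interior N - L) = closure (N - L)"
proof
  show "closure (interior N - L) \<subseteq> closure (N - L)"
    by (rule closure_mono) (use interior_subset in blast)
  have "N - L \<subseteq> - L \<inter> closure (interior N)" using assms(1) by blast
  also have "\<dots> \<subseteq> closure (- L \<inter> interior N)"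
    using assms(2) by (simp add: open_Int_closure_subset open_Compl)
  finally show "closure (N - L) \<subseteq> closure (interior N - L)"
    by (simp add: closure_minimal Diff_eq Int_commute)
qed

lemma random_compact_cong:
  assumes "random_compact M A" "\<And>\<omega>. \<omega> \<in> space M \<Longrightarrow> A \<omega> = B \<omega>"
  shows "random_compact M B"
proof -
  have "(\<lambda>\<omega>. if A \<omega> = {} then \<infinity> else ereal (infdist x (A \<omega>))) \<in> borel_measurable M
    \<longleftrightarrow> (\<lambda>\<omega>. if B \<omega> = {} then \<infinity> else ereal (infdist x (B \<omega>))) \<in> borel_measurable M" for x
    using assms(2) by (intro measurable_cong) simp
  then show ?thesis using assms unfolding random_compact_def by simp
qed

lemma random_compact_closure_Diff:
  fixes N L :: "'w \<Rightarrow> 'x::{metric_space, second_countable_topology} set"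
  assumes N: "random_compact M N" and L: "random_compact M L"
    and regular: "\<And>\<omega>. \<omega> \<in> space M \<Longrightarrow> N \<omega> = closure (interior (N \<omega>))"
  shows "random_compact M (\<lambda>\<omega>. closure (N \<omega> - L \<omega>))"
proof (rule random_compact_cong)
  have closed: "closed (N \<omega>)" "closed (L \<omega>)" and compact: "compact (N \<omega>)" if "\<omega> \<in> space M" for \<omega>
    using N L that unfolding random_compact_def by (auto intro: compact_imp_closed)
  show "closure (interior (N \<omega>) - L \<omega>) = closure (N \<omega> - L \<omega>)" if "\<omega> \<in> space M" for \<omega>
    using closure_interior_Diff[OF regular[OF that] closed(2)[OF that]] .
  show "random_compact M (\<lambda>\<omega>. closure (interior (N \<omega>) - L \<omega>))"
  proof (rule random_compact_closure)
    show "random_open M (\<lambda>\<omega>. interior (N \<omega>) - L \<omega>)"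
      by (intro random_open_Diff random_open_interior N L)
    fix \<omega> assume \<omega>: "\<omega> \<in> space M"
    have "closure (interior (N \<omega>) - L \<omega>) \<subseteq> N \<omega>"
      using closed(1)[OF \<omega>] interior_subset[of "N \<omega>"] by (intro closure_minimal) auto
    then show "compact (closure (interior (N \<omega>) - L \<omega>))"
      using compact_Int_closed[OF compact[OF \<omega>] closed_closure, of "interior (N \<omega>) - L \<omega>"]
      by (simp add: Int_absorb1)
  qed
qed

section \<open>Measurable margins\<close>

(* The infimum is taken along the dense sequence only, which keeps it measurable; continuity
   transfers the bound to the whole closure. *)
lemma measurable_lower_bound:
  fixes \<Phi> :: "'w \<Rightarrow> 'z::{metric_space, second_countable_topology} \<Rightarrow> real"
  assumes U: "random_open M U" "\<And>\<omega>. \<omega> \<in> space M \<Longrightarrow> compact (closure (U \<omega>))"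
    and \<Phi>: "\<And>z. (\<lambda>\<omega>. \<Phi> \<omega> z) \<in> borel_measurable M"
      "\<And>\<omega>. \<omega> \<in> space M \<Longrightarrow> continuous_on (closure (U \<omega>)) (\<Phi> \<omega>)"
  obtains \<tau> where "\<tau> \<in> borel_measurable M" "\<And>\<omega>. \<omega> \<in> space M \<Longrightarrow> 0 < \<tau> \<omega>"
    "\<And>\<omega> z. \<omega> \<in> space M \<Longrightarrow> \<forall>z\<in>closure (U \<omega>). 0 < \<Phi> \<omega> z \<Longrightarrow> z \<in> closure (U \<omega>)
      \<Longrightarrow> \<tau> \<omega> \<le> \<Phi> \<omega> z"
proof -
  define \<mu> where "\<mu> \<omega> = (INF i. if dense_seq i \<in> U \<omega> then \<Phi> \<omega> (dense_seq i) else 1)" for \<omega>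
  define \<tau> where "\<tau> \<omega> = (if 0 < \<mu> \<omega> then \<mu> \<omega> else 1)" for \<omega>
  have [measurable]: "\<And>x. Measurable.pred M (\<lambda>\<omega>. x \<in> U \<omega>)" "\<And>z. (\<lambda>\<omega>. \<Phi> \<omega> z) \<in> borel_measurable M"
    using U(1) \<Phi>(1) by (auto intro: random_open_pred_mem)
  have [measurable]: "\<mu> \<in> borel_measurable M"
    unfolding \<mu>_def by (intro borel_measurable_cINF_real countableI_type) measurable
  have "\<tau> \<in> borel_measurable M" unfolding \<tau>_def by measurable
  moreover have "0 < \<tau> \<omega>" for \<omega> unfolding \<tau>_def by simp
  moreover have "\<tau> \<omega> \<le> \<Phi> \<omega> z"
    if \<omega>: "\<omega> \<in> space M" and pos: "\<forall>z\<in>closure (U \<omega>). 0 < \<Phi> \<omega> z" and z: "z \<in> closure (U \<omega>)" for \<omega> z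
  proof -
    let ?f = "\<lambda>i. if dense_seq i \<in> U \<omega> then \<Phi> \<omega> (dense_seq i) else 1"
    have "closure (U \<omega>) \<noteq> {}" using z by auto
    then obtain z0 where z0: "z0 \<in> closure (U \<omega>)" "\<And>z. z \<in> closure (U \<omega>) \<Longrightarrow> \<Phi> \<omega> z0 \<le> \<Phi> \<omega> z"
      using continuous_attains_inf[OF U(2)[OF \<omega>] _ \<Phi>(2)[OF \<omega>]] by auto
    have lower: "min 1 (\<Phi> \<omega> z0) \<le> ?f i" for i
    proof (cases "dense_seq i \<in> U \<omega>")
      case True
      then have "\<Phi> \<omega> z0 \<le> \<Phi> \<omega> (dense_seq i)" using z0(2) closure_subset by blast
      then show ?thesis using True by simp
    qed simp
    have bdd: "bdd_below (range ?f)" by (rule bdd_belowI2[OF lower])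
    have "0 < min 1 (\<Phi> \<omega> z0)" using pos z0(1) by simp
    also have "min 1 (\<Phi> \<omega> z0) \<le> \<mu> \<omega>" unfolding \<mu>_def by (intro cINF_greatest lower) simp
    finally have \<tau>_eq: "\<tau> \<omega> = \<mu> \<omega>" unfolding \<tau>_def by simp
    have "\<tau> \<omega> \<le> \<Phi> \<omega> (dense_seq i)" if "dense_seq i \<in> U \<omega>" for i
      using cINF_lower[OF bdd, of i] that unfolding \<tau>_eq \<mu>_def by simp
    then have "dense_seq ` {i. dense_seq i \<in> U \<omega>} \<subseteq> {z \<in> closure (U \<omega>). \<tau> \<omega> \<le> \<Phi> \<omega> z}"
      using closure_subset by blast
    moreover have "closed {z \<in> closure (U \<omega>). \<tau> \<omega> \<le> \<Phi> \<omega> z}"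
      by (intro continuous_on_closed_Collect_le continuous_on_const \<Phi>(2)[OF \<omega>] closed_closure)
    ultimately have "closure (dense_seq ` {i. dense_seq i \<in> U \<omega>}) \<subseteq> {z \<in> closure (U \<omega>). \<tau> \<omega> \<le> \<Phi> \<omega> z}"
      by (rule closure_minimal)
    then have "closure (U \<omega>) \<subseteq> {z \<in> closure (U \<omega>). \<tau> \<omega> \<le> \<Phi> \<omega> z}"
      unfolding closure_dense_seq[OF random_open_open[OF U(1) \<omega>]] .
    then show ?thesis using z by blast
  qed
  ultimately show ?thesis using that by blast
qed


(* The right-hand side measures how far (x, u, w) is from a two-step orbit of f0, f1 that starts
   at a point y exiting through V; stays says it never vanishes, compactness makes it uniform. *)
lemma two_step_defect_lower_bound:
  fixes f0 f1 :: "'w \<Rightarrow> 'x::{metric_space, second_countable_topology} \<Rightarrow> 'x"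
  assumes open_sets: "random_open M U" "random_open M U1" "random_open M U2" "random_open M V"
    and compact: "\<And>\<omega>. \<omega> \<in> space M \<Longrightarrow> compact (closure (U \<omega>))"
      "\<And>\<omega>. \<omega> \<in> space M \<Longrightarrow> compact (closure (U1 \<omega>))"
    and measurable: "\<And>x. (\<lambda>\<omega>. f0 \<omega> x) \<in> borel_measurable M" "\<And>x. (\<lambda>\<omega>. f1 \<omega> x) \<in> borel_measurable M"
    and continuous: "\<And>\<omega>. \<omega> \<in> space M \<Longrightarrow> continuous_on UNIV (f0 \<omega>)"
      "\<And>\<omega>. \<omega> \<in> space M \<Longrightarrow> continuous_on UNIV (f1 \<omega>)"
    and stays: "\<And>\<omega> x. \<omega> \<in> space M \<Longrightarrow> x \<in> closure (U \<omega>) \<Longrightarrow> f0 \<omega> x \<in> closure (U1 \<omega>)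
      \<Longrightarrow> f1 \<omega> (f0 \<omega> x) \<in> closure (U2 \<omega>) \<Longrightarrow> f0 \<omega> x \<notin> closure (V \<omega>)"
  obtains \<tau> where "\<tau> \<in> borel_measurable M" "\<And>\<omega>. \<omega> \<in> space M \<Longrightarrow> 0 < \<tau> \<omega>"
    "\<And>\<omega> x y u w v. \<omega> \<in> space M \<Longrightarrow> x \<in> closure (U \<omega>) \<Longrightarrow> y \<in> closure (U \<omega>)
      \<Longrightarrow> u \<in> closure (U1 \<omega>) \<Longrightarrow> w \<in> closure (U2 \<omega>) \<Longrightarrow> v \<in> closure (V \<omega>)
      \<Longrightarrow> \<tau> \<omega> \<le> dist (f0 \<omega> x) u + dist (f1 \<omega> u) w + dist (f0 \<omega> y) v + dist x y"
proof -
  define \<Phi> where "\<Phi> \<omega> p = dist (f0 \<omega> (fst p)) (fst (snd p)) + infdist (f1 \<omega> (fst (snd p))) (U2 \<omega>)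
    + infdist (f0 \<omega> (snd (snd p))) (V \<omega>) + dist (fst p) (snd (snd p))" for \<omega> p
  define W where "W \<omega> = U \<omega> \<times> U1 \<omega> \<times> U \<omega>" for \<omega>
  have closure_W: "closure (W \<omega>) = closure (U \<omega>) \<times> closure (U1 \<omega>) \<times> closure (U \<omega>)" for \<omega>
    unfolding W_def by (simp add: closure_Times)
  have compose: "continuous_on S (\<lambda>p. g (h p))"
    if "continuous_on UNIV g" "continuous_on S h" for g :: "'x \<Rightarrow> 'x" and S and h :: "'x \<times> 'x \<times> 'x \<Rightarrow> 'x"
    using continuous_on_compose2[OF that] by simp
  have W_open: "random_open M W"
    unfolding W_def by (intro random_open_Times open_sets)
  have W_compact: "compact (closure (W \<omega>))" if "\<omega> \<in> space M" for \<omega>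
    unfolding closure_W using compact[OF that] by (intro compact_Times)
  have [measurable]: "(\<lambda>\<omega>. f0 \<omega> x) \<in> borel_measurable M" "(\<lambda>\<omega>. f1 \<omega> x) \<in> borel_measurable M"
    "(\<lambda>\<omega>. infdist (f1 \<omega> x) (U2 \<omega>)) \<in> borel_measurable M"
    "(\<lambda>\<omega>. infdist (f0 \<omega> x) (V \<omega>)) \<in> borel_measurable M" for x
    using measurable measurable_infdist_random_open open_sets by blast+
  have \<Phi>_measurable: "(\<lambda>\<omega>. \<Phi> \<omega> z) \<in> borel_measurable M" for z
    unfolding \<Phi>_def by measurable
  have \<Phi>_continuous: "continuous_on (closure (W \<omega>)) (\<Phi> \<omega>)" if "\<omega> \<in> space M" for \<omega>
    unfolding \<Phi>_def
    by (intro continuous_intros compose[OF continuous(1)[OF that]] compose[OF continuous(2)[OF that]])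
  obtain \<tau> where \<tau>: "\<tau> \<in> borel_measurable M" "\<And>\<omega>. \<omega> \<in> space M \<Longrightarrow> 0 < \<tau> \<omega>"
    and bound: "\<And>\<omega> z. \<omega> \<in> space M \<Longrightarrow> \<forall>z\<in>closure (W \<omega>). 0 < \<Phi> \<omega> z \<Longrightarrow> z \<in> closure (W \<omega>)
      \<Longrightarrow> \<tau> \<omega> \<le> \<Phi> \<omega> z"
    using measurable_lower_bound[OF W_open W_compact \<Phi>_measurable \<Phi>_continuous] by metis
  show thesis
  proof (rule that[OF \<tau>])
    fix \<omega> x y u w v
    assume \<omega>: "\<omega> \<in> space M" and mem: "x \<in> closure (U \<omega>)" "y \<in> closure (U \<omega>)" "u \<in> closure (U1 \<omega>)"
      "w \<in> closure (U2 \<omega>)" "v \<in> closure (V \<omega>)"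
    have nonempty: "U2 \<omega> \<noteq> {}" "V \<omega> \<noteq> {}" using mem(4,5) by auto
    have "0 < \<Phi> \<omega> p" if p: "p \<in> closure (W \<omega>)" for p
    proof (rule ccontr)
      obtain x' u' y' where p_eq: "p = (x', u', y')" by (cases p) auto
      assume "\<not> 0 < \<Phi> \<omega> p"
      then have "dist (f0 \<omega> x') u' + infdist (f1 \<omega> u') (U2 \<omega>) + infdist (f0 \<omega> y') (V \<omega>)
          + dist x' y' \<le> 0"
        unfolding \<Phi>_def p_eq by simp
      then have "dist (f0 \<omega> x') u' = 0" "infdist (f1 \<omega> u') (U2 \<omega>) = 0"
        "infdist (f0 \<omega> y') (V \<omega>) = 0" "dist x' y' = 0"
        using infdist_nonneg[of "f1 \<omega> u'" "U2 \<omega>"] infdist_nonneg[of "f0 \<omega> y'" "V \<omega>"]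
          zero_le_dist[of "f0 \<omega> x'" u'] zero_le_dist[of x' y'] by linarith+
      then show False
        using stays[OF \<omega>, of x'] p nonempty unfolding closure_W p_eq
        by (auto simp: in_closure_iff_infdist_zero)
    qed
    then have "\<tau> \<omega> \<le> \<Phi> \<omega> (x, u, y)" using bound[OF \<omega>] mem(1-3) unfolding closure_W by blast
    also have "\<dots> \<le> dist (f0 \<omega> x) u + dist (f1 \<omega> u) w + dist (f0 \<omega> y) v + dist x y"
      using infdist_le[OF mem(4), of "f1 \<omega> u"] infdist_le[OF mem(5), of "f0 \<omega> y"]
      by (simp add: \<Phi>_def infdist_closure)
    finally show "\<tau> \<omega> \<le> dist (f0 \<omega> x) u + dist (f1 \<omega> u) w + dist (f0 \<omega> y) v + dist x y" .
  qed
qed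

section \<open>A two-step criterion for filtration pairs\<close>

lemma interior_of_top_of_set: "L \<subseteq> N \<Longrightarrow> (top_of_set N) interior_of L = N - closure (N - L)"
  by (metis Diff_Diff_Int Diff_subset closure_of_subtopology euclidean_closure_of
      inf.absorb_iff2 interior_of_closure_of topspace_euclidean_subtopology)

(* Used with g0 = h \<omega>, g1 = h (\<theta> \<omega>) and the sets N, L at \<omega> and \<theta> \<omega>, N at \<theta> (\<theta> \<omega>). *)
definition filtration_step ::
    "('x::topological_space \<Rightarrow> 'x) \<Rightarrow> ('x \<Rightarrow> 'x) \<Rightarrow> 'x set \<Rightarrow> 'x set \<Rightarrow> 'x set \<Rightarrow> 'x set \<Rightarrow> 'x set \<Rightarrow> bool"
  where "filtration_step g0 g1 N0 L0 N1 L1 N2 \<longleftrightarrow>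
    (\<forall>x\<in>N0. g0 x \<in> N1 \<longrightarrow> g1 (g0 x) \<in> N2 \<longrightarrow> g0 x \<in> interior N1)
    \<and> (\<forall>x\<in>L0. g0 x \<in> N1 \<longrightarrow> g1 (g0 x) \<notin> N2)
    \<and> (\<forall>x\<in>closure (N0 - L0). g0 x \<in> interior N1)
    \<and> (\<forall>x\<in>L0. g0 x \<notin> closure (N1 - L1))"

lemma filtration_pair_criterion:
  fixes h :: "'w \<Rightarrow> 'x::{metric_space, second_countable_topology} \<Rightarrow> 'x"
  assumes mds: "mds M \<theta>" and h: "random_homeo M h"
    and N: "random_compact M N" and L: "random_compact M L"
    and regular: "\<forall>\<omega>\<in>space M. N \<omega> = closure (interior (N \<omega>)) \<and> L \<omega> = closure (interior (L \<omega>))"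
    and L_subset: "\<forall>\<omega>\<in>space M. L \<omega> \<subseteq> N \<omega>"
    and step: "\<And>\<omega>. \<omega> \<in> space M \<Longrightarrow>
      filtration_step (h \<omega>) (h (\<theta> \<omega>)) (N \<omega>) (L \<omega>) (N (\<theta> \<omega>)) (L (\<theta> \<omega>)) (N (\<theta> (\<theta> \<omega>)))"
  shows "filtration_pair M \<theta> h N L (Inv M \<theta> h N)"
    and "filtration_pair M \<theta> h N L (Inv M \<theta> h (\<lambda>\<omega>. N \<omega> - L \<omega>))"
    and "random_isol_inv_set M \<theta> h (Inv M \<theta> h (\<lambda>\<omega>. N \<omega> - L \<omega>))"
proof -
  have closed: "closed (N \<omega>)" "closed (L \<omega>)" if "\<omega> \<in> space M" for \<omega>
    using N L that unfolding random_compact_def by (auto intro: compact_imp_closed)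
  have Diff_eq: "Inv M \<theta> h (\<lambda>\<omega>. N \<omega> - L \<omega>) \<omega> = Inv M \<theta> h N \<omega>" if "\<omega> \<in> space M" for \<omega>
    by (rule Inv_Diff_eq_Inv[OF mds h that]) (use step in \<open>auto simp: filtration_step_def\<close>)
  have interior: "Inv M \<theta> h N \<omega> \<subseteq> interior (N \<omega>)" if "\<omega> \<in> space M" for \<omega>
    by (rule Inv_subset_interior[OF mds h that]) (use step in \<open>auto simp: filtration_step_def\<close>)
  have closure_eq: "Inv M \<theta> h (\<lambda>\<omega>. closure (N \<omega> - L \<omega>)) \<omega> = Inv M \<theta> h N \<omega>"
    if \<omega>: "\<omega> \<in> space M" for \<omega>
  proof
    show "Inv M \<theta> h (\<lambda>\<omega>. closure (N \<omega> - L \<omega>)) \<omega> \<subseteq> Inv M \<theta> h N \<omega>"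
      by (rule Inv_mono[OF mds \<omega>]) (simp add: closed closure_minimal)
    have "Inv M \<theta> h (\<lambda>\<omega>. N \<omega> - L \<omega>) \<omega> \<subseteq> Inv M \<theta> h (\<lambda>\<omega>. closure (N \<omega> - L \<omega>)) \<omega>"
      by (rule Inv_mono[OF mds \<omega>]) (rule closure_subset)
    then show "Inv M \<theta> h N \<omega> \<subseteq> Inv M \<theta> h (\<lambda>\<omega>. closure (N \<omega> - L \<omega>)) \<omega>"
      unfolding Diff_eq[OF \<omega>] .
  qed
  have isolating_N: "random_isol_nbhd M \<theta> h N"
    unfolding random_isol_nbhd_def using N interior by blast
  have isolating_K: "random_isol_nbhd M \<theta> h (\<lambda>\<omega>. closure (N \<omega> - L \<omega>))"
    unfolding random_isol_nbhd_def
  proof (intro conjI ballI random_compact_closure_Diff N L)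
    show "N \<omega> = closure (interior (N \<omega>))" if "\<omega> \<in> space M" for \<omega> using regular that by blast
    fix \<omega> assume \<omega>: "\<omega> \<in> space M"
    have "Inv M \<theta> h (\<lambda>\<omega>. N \<omega> - L \<omega>) \<omega> \<subseteq> N \<omega> - L \<omega>"
      unfolding Inv_def by blast
    then have "Inv M \<theta> h (\<lambda>\<omega>. closure (N \<omega> - L \<omega>)) \<omega> \<subseteq> interior (N \<omega>) - L \<omega>"
      using interior[OF \<omega>] unfolding closure_eq[OF \<omega>] Diff_eq[OF \<omega>] by blast
    also have "\<dots> \<subseteq> interior (closure (N \<omega> - L \<omega>))"
      using closed(2)[OF \<omega>] interior_subset[of "N \<omega>"] closure_subset[of "N \<omega> - L \<omega>"]
      by (intro interior_maximal) (auto simp: open_Diff)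
    finally show "Inv M \<theta> h (\<lambda>\<omega>. closure (N \<omega> - L \<omega>)) \<omega> \<subseteq> interior (closure (N \<omega> - L \<omega>))" .
  qed
  have exit_nbhd: "rel_nbhd M L (exit_set \<theta> h N) N"
    unfolding rel_nbhd_def
  proof (intro ballI conjI)
    fix \<omega> assume \<omega>: "\<omega> \<in> space M"
    then show "L \<omega> \<subseteq> N \<omega>" using L_subset by blast
    have "x \<notin> closure (N \<omega> - L \<omega>)" if "x \<in> exit_set \<theta> h N \<omega>" for x
      using step[OF \<omega>] that unfolding filtration_step_def exit_set_def by blast
    then show "exit_set \<theta> h N \<omega> \<subseteq> (top_of_set (N \<omega>)) interior_of (L \<omega>)"
      unfolding interior_of_top_of_set[OF \<open>L \<omega> \<subseteq> N \<omega>\<close>] exit_set_def by blast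
  qed
  have separated: "\<forall>\<omega>\<in>space M. h \<omega> ` L \<omega> \<inter> closure (N (\<theta> \<omega>) - L (\<theta> \<omega>)) = {}"
  proof (intro ballI equals0I)
    fix \<omega> y assume "\<omega> \<in> space M" "y \<in> h \<omega> ` L \<omega> \<inter> closure (N (\<theta> \<omega>) - L (\<theta> \<omega>))"
    then show False using step unfolding filtration_step_def by blast
  qed
  have pair: "filtration_pair M \<theta> h N L S" if S: "\<forall>\<omega>\<in>space M. S \<omega> = Inv M \<theta> h N \<omega>" for S
  proof -
    have "\<forall>\<omega>\<in>space M. S \<omega> = Inv M \<theta> h (\<lambda>\<omega>. closure (N \<omega> - L \<omega>)) \<omega>"
      using S closure_eq by simp
    with S show ?thesis
      unfolding filtration_pair_def
      by (intro conjI isolating_N isolating_K L regular L_subset exit_nbhd separated)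
  qed
  show "filtration_pair M \<theta> h N L (Inv M \<theta> h N)" by (rule pair) simp
  show "filtration_pair M \<theta> h N L (Inv M \<theta> h (\<lambda>\<omega>. N \<omega> - L \<omega>))" by (rule pair) (simp add: Diff_eq)
  show "random_isol_inv_set M \<theta> h (Inv M \<theta> h (\<lambda>\<omega>. N \<omega> - L \<omega>))"
    unfolding random_isol_inv_set_def by (intro exI[of _ N] conjI isolating_N ballI Diff_eq)
qed

section \<open>Isolating blocks and their perturbations\<close>

lemma dist_le_dN:
  fixes \<phi> \<psi> :: "'w \<Rightarrow> 'x::metric_space \<Rightarrow> 'x"
  assumes mds: "mds M \<theta>" and "random_homeo M \<phi>" "random_homeo M \<psi>" "random_compact M N"
    and \<omega>: "\<omega> \<in> space M" and x: "x \<in> N \<omega>"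
  shows "dist (\<phi> \<omega> x) (\<psi> \<omega> x) \<le> dN M \<theta> N \<phi> \<psi> (\<theta> \<omega>)"
proof -
  have \<omega>1: "\<theta> \<omega> \<in> space M" by (rule mds_theta_in_space[OF mds \<omega>])
  \<comment> \<open>the real \<open>Sup\<close> of an unbounded set is unspecified\<close>
  have bdd: "bdd_above (insert 0 (f ` K))"
    if "compact K" "continuous_on K f" for K and f :: "'x \<Rightarrow> real"
    using compact_imp_bounded[OF compact_continuous_image[OF that(2,1)]] by (simp add: bounded_imp_bdd_above)
  have compact: "compact (N \<omega>)" "compact (N (\<theta> (\<theta> \<omega>)))"
    using assms(4) \<omega> mds_theta_in_space[OF mds \<omega>1] unfolding random_compact_def by auto
  let ?S1 = "insert 0 ((\<lambda>x. dist (\<phi> \<omega> x) (\<psi> \<omega> x)) ` N \<omega>)"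
  let ?S2 = "insert 0 ((\<lambda>y. dist (inv (\<phi> (\<theta> \<omega>)) y) (inv (\<psi> (\<theta> \<omega>)) y)) ` N (\<theta> (\<theta> \<omega>)))"
  have dN_eq: "dN M \<theta> N \<phi> \<psi> (\<theta> \<omega>) = Sup ?S1 + Sup ?S2"
    unfolding dN_def by (simp add: mds_inv_theta[OF mds \<omega>] phi_int_minus_one_theta[OF mds \<omega>1])
  have cont1: "continuous_on (N \<omega>) (\<lambda>x. dist (\<phi> \<omega> x) (\<psi> \<omega> x))"
    using random_homeo_continuous_on[OF assms(2) \<omega>] random_homeo_continuous_on[OF assms(3) \<omega>]
    by (rule continuous_on_dist)
  have cont2: "continuous_on (N (\<theta> (\<theta> \<omega>))) (\<lambda>y. dist (inv (\<phi> (\<theta> \<omega>)) y) (inv (\<psi> (\<theta> \<omega>)) y))"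
    using random_homeo_inv_continuous_on[OF assms(2) \<omega>1] random_homeo_inv_continuous_on[OF assms(3) \<omega>1]
    by (rule continuous_on_dist)
  have "dist (\<phi> \<omega> x) (\<psi> \<omega> x) \<le> Sup ?S1"
    using x by (intro cSup_upper[OF _ bdd[OF compact(1) cont1]]) blast
  moreover have "0 \<le> Sup ?S2"
    by (intro cSup_upper[OF _ bdd[OF compact(2) cont2]]) blast
  ultimately show ?thesis unfolding dN_eq by linarith
qed

context
  fixes M :: "'w measure" and \<theta> :: "'w \<Rightarrow> 'w"
    and \<phi> :: "'w \<Rightarrow> 'x::{metric_space, second_countable_topology} \<Rightarrow> 'x" and N :: "'w \<Rightarrow> 'x set"
  assumes mds: "mds M \<theta>" and \<phi>: "random_homeo M \<phi>" and block: "random_isol_block M \<theta> \<phi> N"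
    and regular_N: "\<forall>\<omega>\<in>space M. N \<omega> = closure (interior (N \<omega>))"
begin

lemma random_compact_N: "random_compact M N"
  using block unfolding random_isol_block_def by blast

lemma closed_N: "\<omega> \<in> space M \<Longrightarrow> closed (N \<omega>)"
  using random_compact_N unfolding random_compact_def by (simp add: compact_imp_closed)

lemma closure_interior_N: "\<omega> \<in> space M \<Longrightarrow> closure (interior (N \<omega>)) = N \<omega>"
  by (rule sym) (use regular_N in blast)

lemma random_open_N:
  shows "random_open M (\<lambda>\<omega>. interior (N \<omega>))" and "random_open M (\<lambda>\<omega>. interior (N (\<theta> \<omega>)))"
    and "random_open M (\<lambda>\<omega>. interior (N (\<theta> (\<theta> \<omega>))))" and "random_open M (\<lambda>\<omega>. - N (\<theta> \<omega>))"
proof -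
  note \<theta> = measurable_mds_theta[OF mds]
  show "random_open M (\<lambda>\<omega>. interior (N \<omega>))"
    by (rule random_open_interior[OF random_compact_N])
  then show interior_\<theta>: "random_open M (\<lambda>\<omega>. interior (N (\<theta> \<omega>)))"
    by (rule random_open_compose[OF _ \<theta>])
  show "random_open M (\<lambda>\<omega>. interior (N (\<theta> (\<theta> \<omega>))))"
    by (rule random_open_compose[OF interior_\<theta> \<theta>])
  show "random_open M (\<lambda>\<omega>. - N (\<theta> \<omega>))"
    by (rule random_open_compose[OF random_open_Compl[OF random_compact_N] \<theta>])
qed

lemma N_two_step_block:
  "\<omega> \<in> space M \<Longrightarrow> x \<in> N \<omega> \<Longrightarrow> \<phi> \<omega> x \<in> N (\<theta> \<omega>) \<Longrightarrow> \<phi> (\<theta> \<omega>) (\<phi> \<omega> x) \<in> N (\<theta> (\<theta> \<omega>))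
    \<Longrightarrow> \<phi> \<omega> x \<in> interior (N (\<theta> \<omega>))"
  by (rule random_isol_block_two_step[OF mds \<phi> block])

lemma phi_two_step_margin:
  assumes U: "random_open M U" "\<And>\<omega>. \<omega> \<in> space M \<Longrightarrow> compact (closure (U \<omega>))"
    and U2: "random_open M U2" and V: "random_open M V"
    and stays: "\<And>\<omega> x. \<omega> \<in> space M \<Longrightarrow> x \<in> closure (U \<omega>) \<Longrightarrow> \<phi> \<omega> x \<in> N (\<theta> \<omega>)
      \<Longrightarrow> \<phi> (\<theta> \<omega>) (\<phi> \<omega> x) \<in> closure (U2 \<omega>) \<Longrightarrow> \<phi> \<omega> x \<notin> closure (V \<omega>)"
  obtains \<tau> where "\<tau> \<in> borel_measurable M" "\<And>\<omega>. \<omega> \<in> space M \<Longrightarrow> 0 < \<tau> \<omega>"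
    "\<And>\<omega> x y u w v. \<omega> \<in> space M \<Longrightarrow> x \<in> closure (U \<omega>) \<Longrightarrow> y \<in> closure (U \<omega>) \<Longrightarrow> u \<in> N (\<theta> \<omega>)
      \<Longrightarrow> w \<in> closure (U2 \<omega>) \<Longrightarrow> v \<in> closure (V \<omega>)
      \<Longrightarrow> \<tau> \<omega> \<le> dist (\<phi> \<omega> x) u + dist (\<phi> (\<theta> \<omega>) u) w + dist (\<phi> \<omega> y) v + dist x y"
proof -
  have N1: "closure (interior (N (\<theta> \<omega>))) = N (\<theta> \<omega>)" if "\<omega> \<in> space M" for \<omega>
    by (rule closure_interior_N[OF mds_theta_in_space[OF mds that]])
  have compact1: "compact (closure (interior (N (\<theta> \<omega>))))" if "\<omega> \<in> space M" for \<omega>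
    using random_compact_N mds_theta_in_space[OF mds that] unfolding N1[OF that] random_compact_def
    by blast
  have meas0: "(\<lambda>\<omega>. \<phi> \<omega> x) \<in> borel_measurable M" for x
    using \<phi> unfolding random_homeo_def by blast
  have meas1: "(\<lambda>\<omega>. \<phi> (\<theta> \<omega>) x) \<in> borel_measurable M" for x
    using measurable_compose[OF measurable_mds_theta[OF mds] meas0] .
  have cont: "continuous_on UNIV (\<phi> \<omega>)" "continuous_on UNIV (\<phi> (\<theta> \<omega>))" if "\<omega> \<in> space M" for \<omega>
    using random_homeo_continuous_on[OF \<phi>] mds_theta_in_space[OF mds that] that by blast+
  have stays1: "\<phi> \<omega> x \<notin> closure (V \<omega>)"
    if "\<omega> \<in> space M" "x \<in> closure (U \<omega>)" "\<phi> \<omega> x \<in> closure (interior (N (\<theta> \<omega>)))"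
      "\<phi> (\<theta> \<omega>) (\<phi> \<omega> x) \<in> closure (U2 \<omega>)" for \<omega> x
    using stays that N1 by simp
  obtain \<tau> where \<tau>: "\<tau> \<in> borel_measurable M" "\<And>\<omega>. \<omega> \<in> space M \<Longrightarrow> 0 < \<tau> \<omega>"
    and bound: "\<And>\<omega> x y u w v. \<omega> \<in> space M \<Longrightarrow> x \<in> closure (U \<omega>) \<Longrightarrow> y \<in> closure (U \<omega>)
      \<Longrightarrow> u \<in> closure (interior (N (\<theta> \<omega>))) \<Longrightarrow> w \<in> closure (U2 \<omega>) \<Longrightarrow> v \<in> closure (V \<omega>)
      \<Longrightarrow> \<tau> \<omega> \<le> dist (\<phi> \<omega> x) u + dist (\<phi> (\<theta> \<omega>) u) w + dist (\<phi> \<omega> y) v + dist x y"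
    using two_step_defect_lower_bound[OF U(1) random_open_N(2) U2 V U(2) compact1 meas0 meas1
        cont stays1] by blast
  show thesis
  proof (rule that[OF \<tau>])
    fix \<omega> x y u w v
    assume "\<omega> \<in> space M" "x \<in> closure (U \<omega>)" "y \<in> closure (U \<omega>)" "u \<in> N (\<theta> \<omega>)"
      "w \<in> closure (U2 \<omega>)" "v \<in> closure (V \<omega>)"
    then show "\<tau> \<omega> \<le> dist (\<phi> \<omega> x) u + dist (\<phi> (\<theta> \<omega>) u) w + dist (\<phi> \<omega> y) v + dist x y"
      by (intro bound) (simp_all add: N1)
  qed
qed

lemma block_margin:
  obtains \<tau> where "\<tau> \<in> borel_measurable M" "\<And>\<omega>. \<omega> \<in> space M \<Longrightarrow> 0 < \<tau> \<omega>"
    "\<And>\<omega> x y u w v. \<omega> \<in> space M \<Longrightarrow> x \<in> N \<omega> \<Longrightarrow> y \<in> N \<omega> \<Longrightarrow> u \<in> N (\<theta> \<omega>)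
      \<Longrightarrow> w \<in> N (\<theta> (\<theta> \<omega>)) \<Longrightarrow> v \<notin> interior (N (\<theta> \<omega>))
      \<Longrightarrow> \<tau> \<omega> \<le> dist (\<phi> \<omega> x) u + dist (\<phi> (\<theta> \<omega>) u) w + dist (\<phi> \<omega> y) v + dist x y"
proof -
  have N2: "closure (interior (N (\<theta> (\<theta> \<omega>)))) = N (\<theta> (\<theta> \<omega>))" if "\<omega> \<in> space M" for \<omega>
    using closure_interior_N mds_theta_in_space[OF mds] that by blast
  have compact: "compact (closure (interior (N \<omega>)))" if "\<omega> \<in> space M" for \<omega>
    using random_compact_N that unfolding closure_interior_N[OF that] random_compact_def by blast
  have stays: "\<phi> \<omega> x \<notin> closure (- N (\<theta> \<omega>))"
    if "\<omega> \<in> space M" "x \<in> closure (interior (N \<omega>))" "\<phi> \<omega> x \<in> N (\<theta> \<omega>)"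
      "\<phi> (\<theta> \<omega>) (\<phi> \<omega> x) \<in> closure (interior (N (\<theta> (\<theta> \<omega>))))" for \<omega> x
    using N_two_step_block[of \<omega> x] that closure_interior_N N2 by (simp add: closure_complement)
  obtain \<tau> where \<tau>: "\<tau> \<in> borel_measurable M" "\<And>\<omega>. \<omega> \<in> space M \<Longrightarrow> 0 < \<tau> \<omega>"
    and bound: "\<And>\<omega> x y u w v. \<omega> \<in> space M \<Longrightarrow> x \<in> closure (interior (N \<omega>))
      \<Longrightarrow> y \<in> closure (interior (N \<omega>)) \<Longrightarrow> u \<in> N (\<theta> \<omega>)
      \<Longrightarrow> w \<in> closure (interior (N (\<theta> (\<theta> \<omega>)))) \<Longrightarrow> v \<in> closure (- N (\<theta> \<omega>))
      \<Longrightarrow> \<tau> \<omega> \<le> dist (\<phi> \<omega> x) u + dist (\<phi> (\<theta> \<omega>) u) w + dist (\<phi> \<omega> y) v + dist x y"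
    using phi_two_step_margin[OF random_open_N(1) compact random_open_N(3,4) stays] by blast
  show thesis
  proof (rule that[OF \<tau>])
    fix \<omega> x y u w v
    assume "\<omega> \<in> space M" "x \<in> N \<omega>" "y \<in> N \<omega>" "u \<in> N (\<theta> \<omega>)" "w \<in> N (\<theta> (\<theta> \<omega>))"
      "v \<notin> interior (N (\<theta> \<omega>))"
    then show "\<tau> \<omega> \<le> dist (\<phi> \<omega> x) u + dist (\<phi> (\<theta> \<omega>) u) w + dist (\<phi> \<omega> y) v + dist x y"
      by (intro bound) (simp_all add: closure_interior_N N2 closure_complement)
  qed
qed

lemma exit_set_separation:
  obtains \<epsilon> where "\<epsilon> \<in> borel_measurable M" "\<And>\<omega>. \<omega> \<in> space M \<Longrightarrow> 0 < \<epsilon> \<omega>"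
    "\<And>\<omega> z y. \<omega> \<in> space M \<Longrightarrow> z \<in> N \<omega> \<Longrightarrow> \<phi> \<omega> z \<in> N (\<theta> \<omega>)
      \<Longrightarrow> \<phi> (\<theta> \<omega>) (\<phi> \<omega> z) \<in> N (\<theta> (\<theta> \<omega>)) \<Longrightarrow> y \<in> exit_set \<theta> \<phi> N \<omega> \<Longrightarrow> \<epsilon> \<omega> \<le> dist z y"
proof -
  obtain \<tau> where \<tau>: "\<tau> \<in> borel_measurable M" "\<And>\<omega>. \<omega> \<in> space M \<Longrightarrow> 0 < \<tau> \<omega>"
    and bound: "\<And>\<omega> x y u w v. \<omega> \<in> space M \<Longrightarrow> x \<in> N \<omega> \<Longrightarrow> y \<in> N \<omega> \<Longrightarrow> u \<in> N (\<theta> \<omega>)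
      \<Longrightarrow> w \<in> N (\<theta> (\<theta> \<omega>)) \<Longrightarrow> v \<notin> interior (N (\<theta> \<omega>))
      \<Longrightarrow> \<tau> \<omega> \<le> dist (\<phi> \<omega> x) u + dist (\<phi> (\<theta> \<omega>) u) w + dist (\<phi> \<omega> y) v + dist x y"
    using block_margin by blast
  show thesis
  proof (rule that[OF \<tau>])
    fix \<omega> z y
    assume "\<omega> \<in> space M" "z \<in> N \<omega>" "\<phi> \<omega> z \<in> N (\<theta> \<omega>)" "\<phi> (\<theta> \<omega>) (\<phi> \<omega> z) \<in> N (\<theta> (\<theta> \<omega>))"
      and "y \<in> exit_set \<theta> \<phi> N \<omega>"
    then show "\<tau> \<omega> \<le> dist z y"
      using bound[of \<omega> z y "\<phi> \<omega> z" "\<phi> (\<theta> \<omega>) (\<phi> \<omega> z)" "\<phi> \<omega> y"] unfolding exit_set_def by simp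
  qed
qed

lemma block_robust:
  obtains \<tau> where "\<tau> \<in> borel_measurable M" "\<And>\<omega>. \<omega> \<in> space M \<Longrightarrow> 0 < \<tau> \<omega>"
    "\<And>\<omega> g0 g1 x. \<omega> \<in> space M \<Longrightarrow> \<forall>x\<in>N \<omega>. dist (\<phi> \<omega> x) (g0 x) < \<tau> \<omega>
      \<Longrightarrow> \<forall>x\<in>N (\<theta> \<omega>). dist (\<phi> (\<theta> \<omega>) x) (g1 x) < \<tau> \<omega>
      \<Longrightarrow> x \<in> N \<omega> \<Longrightarrow> g0 x \<in> N (\<theta> \<omega>) \<Longrightarrow> g1 (g0 x) \<in> N (\<theta> (\<theta> \<omega>))
      \<Longrightarrow> g0 x \<in> interior (N (\<theta> \<omega>))"
proof -
  obtain \<tau> where \<tau>: "\<tau> \<in> borel_measurable M" "\<And>\<omega>. \<omega> \<in> space M \<Longrightarrow> 0 < \<tau> \<omega>"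
    and bound: "\<And>\<omega> x y u w v. \<omega> \<in> space M \<Longrightarrow> x \<in> N \<omega> \<Longrightarrow> y \<in> N \<omega> \<Longrightarrow> u \<in> N (\<theta> \<omega>)
      \<Longrightarrow> w \<in> N (\<theta> (\<theta> \<omega>)) \<Longrightarrow> v \<notin> interior (N (\<theta> \<omega>))
      \<Longrightarrow> \<tau> \<omega> \<le> dist (\<phi> \<omega> x) u + dist (\<phi> (\<theta> \<omega>) u) w + dist (\<phi> \<omega> y) v + dist x y"
    using block_margin by blast
  have [measurable]: "\<tau> \<in> borel_measurable M" by (rule \<tau>(1))
  show thesis
  proof (rule that[of "\<lambda>\<omega>. \<tau> \<omega> / 3"])
    show "(\<lambda>\<omega>. \<tau> \<omega> / 3) \<in> borel_measurable M" by measurable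
    show "0 < \<tau> \<omega> / 3" if "\<omega> \<in> space M" for \<omega> using \<tau>(2)[OF that] by simp
    fix \<omega> g0 g1 x
    assume \<omega>: "\<omega> \<in> space M" and close0: "\<forall>x\<in>N \<omega>. dist (\<phi> \<omega> x) (g0 x) < \<tau> \<omega> / 3"
      and close1: "\<forall>x\<in>N (\<theta> \<omega>). dist (\<phi> (\<theta> \<omega>) x) (g1 x) < \<tau> \<omega> / 3"
      and x: "x \<in> N \<omega>" and g0x: "g0 x \<in> N (\<theta> \<omega>)" and g1g0x: "g1 (g0 x) \<in> N (\<theta> (\<theta> \<omega>))"
    show "g0 x \<in> interior (N (\<theta> \<omega>))"
    proof (rule ccontr)
      assume "g0 x \<notin> interior (N (\<theta> \<omega>))"
      from bound[OF \<omega> x x g0x g1g0x this]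
      have "\<tau> \<omega> \<le> 2 * dist (\<phi> \<omega> x) (g0 x) + dist (\<phi> (\<theta> \<omega>) (g0 x)) (g1 (g0 x))"
        by simp
      moreover have "dist (\<phi> \<omega> x) (g0 x) < \<tau> \<omega> / 3" "dist (\<phi> (\<theta> \<omega>) (g0 x)) (g1 (g0 x)) < \<tau> \<omega> / 3"
        using close0 close1 x g0x by blast+
      ultimately show False by linarith
    qed
  qed
qed

(* d^N at \<theta> \<omega> controls \<phi> \<omega>, so \<tau> is shifted back once for \<phi> \<omega> and twice for \<phi> (\<theta> \<omega>). *)
lemma dN_control:
  assumes "\<tau> \<in> borel_measurable M" "\<And>\<omega>. \<omega> \<in> space M \<Longrightarrow> 0 < \<tau> \<omega>"
  obtains \<delta> where "\<delta> \<in> borel_measurable M" "\<And>\<omega>. \<omega> \<in> space M \<Longrightarrow> 0 < \<delta> \<omega>"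
    "\<And>\<psi> \<omega>. random_homeo M \<psi> \<Longrightarrow> \<forall>\<omega>\<in>space M. dN M \<theta> N \<phi> \<psi> \<omega> < \<delta> \<omega> \<Longrightarrow> \<omega> \<in> space M
      \<Longrightarrow> (\<forall>x\<in>N \<omega>. dist (\<phi> \<omega> x) (\<psi> \<omega> x) < \<tau> \<omega>)
        \<and> (\<forall>x\<in>N (\<theta> \<omega>). dist (\<phi> (\<theta> \<omega>) x) (\<psi> (\<theta> \<omega>) x) < \<tau> \<omega>)"
proof -
  define \<theta>' where "\<theta>' = inv_into (space M) \<theta>"
  define \<delta> where "\<delta> \<omega> = min (\<tau> (\<theta>' \<omega>)) (\<tau> (\<theta>' (\<theta>' \<omega>)))" for \<omega>
  have \<theta>'_\<theta>: "\<theta>' (\<theta> \<omega>) = \<omega>" if "\<omega> \<in> space M" for \<omega>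
    unfolding \<theta>'_def by (rule mds_inv_theta[OF mds that])
  have [measurable]: "\<theta>' \<in> M \<rightarrow>\<^sub>M M" "\<tau> \<in> borel_measurable M"
    using measurable_mds_inv[OF mds] assms(1) unfolding \<theta>'_def by auto
  have \<delta>_le: "\<delta> (\<theta> \<omega>) \<le> \<tau> \<omega>" "\<delta> (\<theta> (\<theta> \<omega>)) \<le> \<tau> \<omega>" if "\<omega> \<in> space M" for \<omega>
    unfolding \<delta>_def \<theta>'_\<theta>[OF mds_theta_in_space[OF mds that]] \<theta>'_\<theta>[OF that] by simp_all
  have dist_less: "dist (\<phi> \<omega> x) (\<psi> \<omega> x) < \<delta> (\<theta> \<omega>)"
    if \<psi>: "random_homeo M \<psi>" and close: "\<forall>\<omega>\<in>space M. dN M \<theta> N \<phi> \<psi> \<omega> < \<delta> \<omega>"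
      and \<omega>: "\<omega> \<in> space M" and x: "x \<in> N \<omega>" for \<psi> \<omega> x
  proof -
    have "dist (\<phi> \<omega> x) (\<psi> \<omega> x) \<le> dN M \<theta> N \<phi> \<psi> (\<theta> \<omega>)"
      by (rule dist_le_dN[OF mds \<phi> \<psi> random_compact_N \<omega> x])
    also have "\<dots> < \<delta> (\<theta> \<omega>)" using close mds_theta_in_space[OF mds \<omega>] by blast
    finally show ?thesis .
  qed
  show thesis
  proof (rule that)
    show "\<delta> \<in> borel_measurable M" unfolding \<delta>_def by measurable
    show "0 < \<delta> \<omega>" if "\<omega> \<in> space M" for \<omega>
      using assms(2) mds_inv_in_space[OF mds] that unfolding \<delta>_def \<theta>'_def by simp
    fix \<psi> \<omega> assume \<psi>: "random_homeo M \<psi>" and close: "\<forall>\<omega>\<in>space M. dN M \<theta> N \<phi> \<psi> \<omega> < \<delta> \<omega>"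
      and \<omega>: "\<omega> \<in> space M"
    have "dist (\<phi> \<omega> x) (\<psi> \<omega> x) < \<tau> \<omega>" if "x \<in> N \<omega>" for x
      using dist_less[OF \<psi> close \<omega> that] \<delta>_le(1)[OF \<omega>] by linarith
    moreover have "dist (\<phi> (\<theta> \<omega>) x) (\<psi> (\<theta> \<omega>) x) < \<tau> \<omega>" if "x \<in> N (\<theta> \<omega>)" for x
      using dist_less[OF \<psi> close mds_theta_in_space[OF mds \<omega>] that] \<delta>_le(2)[OF \<omega>] by linarith
    ultimately show "(\<forall>x\<in>N \<omega>. dist (\<phi> \<omega> x) (\<psi> \<omega> x) < \<tau> \<omega>)
        \<and> (\<forall>x\<in>N (\<theta> \<omega>). dist (\<phi> (\<theta> \<omega>) x) (\<psi> (\<theta> \<omega>) x) < \<tau> \<omega>)" by blast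
  qed
qed

context
  fixes \<epsilon> :: "'w \<Rightarrow> real" and L :: "'w \<Rightarrow> 'x set"
  assumes separation: "\<And>\<omega> z y. \<omega> \<in> space M \<Longrightarrow> z \<in> N \<omega> \<Longrightarrow> \<phi> \<omega> z \<in> N (\<theta> \<omega>)
      \<Longrightarrow> \<phi> (\<theta> \<omega>) (\<phi> \<omega> z) \<in> N (\<theta> (\<theta> \<omega>)) \<Longrightarrow> y \<in> exit_set \<theta> \<phi> N \<omega> \<Longrightarrow> \<epsilon> \<omega> \<le> dist z y"
    and L: "random_compact M L" and exit_nbhd: "rel_nbhd M L (exit_set \<theta> \<phi> N) N"
    and regular_L: "\<forall>\<omega>\<in>space M. L \<omega> = closure (interior (L \<omega>))"
    and near_exit: "\<forall>\<omega>\<in>space M. \<forall>x\<in>L \<omega>. \<exists>y\<in>exit_set \<theta> \<phi> N \<omega>. dist x y < \<epsilon> \<omega>"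
begin

lemma L_subset_N: "\<omega> \<in> space M \<Longrightarrow> L \<omega> \<subseteq> N \<omega>"
  using exit_nbhd unfolding rel_nbhd_def by blast

lemma exit_set_disjoint: "\<omega> \<in> space M \<Longrightarrow> x \<in> exit_set \<theta> \<phi> N \<omega> \<Longrightarrow> x \<notin> closure (N \<omega> - L \<omega>)"
  using exit_nbhd interior_of_top_of_set[OF L_subset_N] unfolding rel_nbhd_def by blast

lemma L_leaves_N:
  assumes \<omega>: "\<omega> \<in> space M" and x: "x \<in> L \<omega>" and "\<phi> \<omega> x \<in> N (\<theta> \<omega>)"
  shows "\<phi> (\<theta> \<omega>) (\<phi> \<omega> x) \<notin> N (\<theta> (\<theta> \<omega>))"
proof
  assume "\<phi> (\<theta> \<omega>) (\<phi> \<omega> x) \<in> N (\<theta> (\<theta> \<omega>))"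
  moreover obtain y where "y \<in> exit_set \<theta> \<phi> N \<omega>" "dist x y < \<epsilon> \<omega>" using near_exit \<omega> x by blast
  moreover have "x \<in> N \<omega>" using L_subset_N[OF \<omega>] x by blast
  ultimately have "\<epsilon> \<omega> \<le> dist x y" and "dist x y < \<epsilon> \<omega>"
    using separation[OF \<omega> _ assms(3)] by blast+
  then show False by simp
qed

lemma closure_Diff_subset_N: "\<omega> \<in> space M \<Longrightarrow> closure (N \<omega> - L \<omega>) \<subseteq> N \<omega>"
  using closed_N by (simp add: closure_minimal Diff_subset)

lemma closure_Diff_maps_into_interior:
  assumes \<omega>: "\<omega> \<in> space M" and x: "x \<in> closure (N \<omega> - L \<omega>)"
  shows "\<phi> \<omega> x \<in> interior (N (\<theta> \<omega>))"
proof (rule ccontr)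
  assume "\<phi> \<omega> x \<notin> interior (N (\<theta> \<omega>))"
  then have "x \<in> exit_set \<theta> \<phi> N \<omega>" using x closure_Diff_subset_N[OF \<omega>] unfolding exit_set_def by blast
  then show False using exit_set_disjoint[OF \<omega>] x by blast
qed

lemma L_image_disjoint:
  assumes \<omega>: "\<omega> \<in> space M" and x: "x \<in> L \<omega>"
  shows "\<phi> \<omega> x \<notin> closure (N (\<theta> \<omega>) - L (\<theta> \<omega>))"
proof
  have \<omega>1: "\<theta> \<omega> \<in> space M" by (rule mds_theta_in_space[OF mds \<omega>])
  assume in_closure: "\<phi> \<omega> x \<in> closure (N (\<theta> \<omega>) - L (\<theta> \<omega>))"
  then have "\<phi> \<omega> x \<in> N (\<theta> \<omega>)" using closure_Diff_subset_N[OF \<omega>1] by blast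
  moreover have "\<phi> (\<theta> \<omega>) (\<phi> \<omega> x) \<notin> interior (N (\<theta> (\<theta> \<omega>)))"
    using L_leaves_N[OF \<omega> x] calculation interior_subset by blast
  ultimately have "\<phi> \<omega> x \<in> exit_set \<theta> \<phi> N (\<theta> \<omega>)" unfolding exit_set_def by blast
  then show False using exit_set_disjoint[OF \<omega>1] in_closure by blast
qed

lemma filtration_step_phi:
  assumes "\<omega> \<in> space M"
  shows "filtration_step (\<phi> \<omega>) (\<phi> (\<theta> \<omega>)) (N \<omega>) (L \<omega>) (N (\<theta> \<omega>)) (L (\<theta> \<omega>)) (N (\<theta> (\<theta> \<omega>)))"
  unfolding filtration_step_def
  using N_two_step_block[OF assms] L_leaves_N[OF assms] closure_Diff_maps_into_interior[OF assms]
    L_image_disjoint[OF assms] by blast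

lemma regular_N_L: "\<forall>\<omega>\<in>space M. N \<omega> = closure (interior (N \<omega>)) \<and> L \<omega> = closure (interior (L \<omega>))"
  using regular_N regular_L by meson

lemma filtration_pair_phi: "filtration_pair M \<theta> \<phi> N L (Inv M \<theta> \<phi> N)"
  by (rule filtration_pair_criterion(1)[OF mds \<phi> random_compact_N L regular_N_L _ filtration_step_phi])
    (use L_subset_N in meson)


lemma closure_interior_L: "\<omega> \<in> space M \<Longrightarrow> closure (interior (L \<omega>)) = L \<omega>"
  by (rule sym) (use regular_L in blast)

lemma avoid_robust:
  obtains \<tau> where "\<tau> \<in> borel_measurable M" "\<And>\<omega>. \<omega> \<in> space M \<Longrightarrow> 0 < \<tau> \<omega>"
    "\<And>\<omega> g0 g1 x. \<omega> \<in> space M \<Longrightarrow> \<forall>x\<in>N \<omega>. dist (\<phi> \<omega> x) (g0 x) < \<tau> \<omega>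
      \<Longrightarrow> \<forall>x\<in>N (\<theta> \<omega>). dist (\<phi> (\<theta> \<omega>) x) (g1 x) < \<tau> \<omega>
      \<Longrightarrow> x \<in> L \<omega> \<Longrightarrow> g0 x \<in> N (\<theta> \<omega>) \<Longrightarrow> g1 (g0 x) \<notin> N (\<theta> (\<theta> \<omega>))"
proof -
  have N2: "closure (interior (N (\<theta> (\<theta> \<omega>)))) = N (\<theta> (\<theta> \<omega>))" if "\<omega> \<in> space M" for \<omega>
    using closure_interior_N mds_theta_in_space[OF mds] that by blast
  have compact: "compact (closure (interior (L \<omega>)))" if "\<omega> \<in> space M" for \<omega>
    using L that unfolding closure_interior_L[OF that] random_compact_def by blast
  have stays: "\<phi> \<omega> x \<notin> closure UNIV"
    if "\<omega> \<in> space M" "x \<in> closure (interior (L \<omega>))" "\<phi> \<omega> x \<in> N (\<theta> \<omega>)"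
      "\<phi> (\<theta> \<omega>) (\<phi> \<omega> x) \<in> closure (interior (N (\<theta> (\<theta> \<omega>))))" for \<omega> x
    using L_leaves_N[of \<omega> x] that closure_interior_L N2 by simp
  obtain \<tau> where \<tau>: "\<tau> \<in> borel_measurable M" "\<And>\<omega>. \<omega> \<in> space M \<Longrightarrow> 0 < \<tau> \<omega>"
    and bound: "\<And>\<omega> x y u w v. \<omega> \<in> space M \<Longrightarrow> x \<in> closure (interior (L \<omega>))
      \<Longrightarrow> y \<in> closure (interior (L \<omega>)) \<Longrightarrow> u \<in> N (\<theta> \<omega>)
      \<Longrightarrow> w \<in> closure (interior (N (\<theta> (\<theta> \<omega>)))) \<Longrightarrow> v \<in> closure UNIV
      \<Longrightarrow> \<tau> \<omega> \<le> dist (\<phi> \<omega> x) u + dist (\<phi> (\<theta> \<omega>) u) w + dist (\<phi> \<omega> y) v + dist x y"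
    using phi_two_step_margin[OF random_open_interior[OF L] compact random_open_N(3) random_open_UNIV
        stays] by blast
  have [measurable]: "\<tau> \<in> borel_measurable M" by (rule \<tau>(1))
  show thesis
  proof (rule that[of "\<lambda>\<omega>. \<tau> \<omega> / 3"])
    show "(\<lambda>\<omega>. \<tau> \<omega> / 3) \<in> borel_measurable M" by measurable
    show "0 < \<tau> \<omega> / 3" if "\<omega> \<in> space M" for \<omega> using \<tau>(2)[OF that] by simp
    fix \<omega> g0 g1 x
    assume \<omega>: "\<omega> \<in> space M" and close0: "\<forall>x\<in>N \<omega>. dist (\<phi> \<omega> x) (g0 x) < \<tau> \<omega> / 3"
      and close1: "\<forall>x\<in>N (\<theta> \<omega>). dist (\<phi> (\<theta> \<omega>) x) (g1 x) < \<tau> \<omega> / 3"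
      and x: "x \<in> L \<omega>" and g0x: "g0 x \<in> N (\<theta> \<omega>)"
    show "g1 (g0 x) \<notin> N (\<theta> (\<theta> \<omega>))"
    proof
      assume "g1 (g0 x) \<in> N (\<theta> (\<theta> \<omega>))"
      then have "\<tau> \<omega> \<le> dist (\<phi> \<omega> x) (g0 x) + dist (\<phi> (\<theta> \<omega>) (g0 x)) (g1 (g0 x))
          + dist (\<phi> \<omega> x) (g0 x) + dist x x"
        by (intro bound) (simp_all add: \<omega> x g0x closure_interior_L N2)
      then have "\<tau> \<omega> \<le> 2 * dist (\<phi> \<omega> x) (g0 x) + dist (\<phi> (\<theta> \<omega>) (g0 x)) (g1 (g0 x))"
        by simp
      moreover have "dist (\<phi> \<omega> x) (g0 x) < \<tau> \<omega> / 3" "dist (\<phi> (\<theta> \<omega>) (g0 x)) (g1 (g0 x)) < \<tau> \<omega> / 3"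
        using close0 close1 L_subset_N[OF \<omega>] x g0x by blast+
      ultimately show False by linarith
    qed
  qed
qed

lemma inward_robust:
  obtains \<tau> where "\<tau> \<in> borel_measurable M" "\<And>\<omega>. \<omega> \<in> space M \<Longrightarrow> 0 < \<tau> \<omega>"
    "\<And>\<omega> g0 x. \<omega> \<in> space M \<Longrightarrow> \<forall>x\<in>N \<omega>. dist (\<phi> \<omega> x) (g0 x) < \<tau> \<omega>
      \<Longrightarrow> x \<in> closure (N \<omega> - L \<omega>) \<Longrightarrow> g0 x \<in> interior (N (\<theta> \<omega>))"
proof -
  have K: "closure (interior (N \<omega>) - L \<omega>) = closure (N \<omega> - L \<omega>)" if "\<omega> \<in> space M" for \<omega>
    using closure_interior_Diff[OF sym[OF closure_interior_N[OF that]]] L that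
    unfolding random_compact_def by (simp add: compact_imp_closed)
  have "random_compact M (\<lambda>\<omega>. closure (N \<omega> - L \<omega>))"
    by (rule random_compact_closure_Diff[OF random_compact_N L]) (use regular_N in blast)
  then have compact: "compact (closure (interior (N \<omega>) - L \<omega>))" if "\<omega> \<in> space M" for \<omega>
    using that unfolding random_compact_def K[OF that] by blast
  have stays: "\<phi> \<omega> x \<notin> closure (- N (\<theta> \<omega>))"
    if "\<omega> \<in> space M" "x \<in> closure (interior (N \<omega>) - L \<omega>)" for \<omega> x
    using closure_Diff_maps_into_interior[of \<omega> x] that K by (simp add: closure_complement)
  obtain \<tau> where \<tau>: "\<tau> \<in> borel_measurable M" "\<And>\<omega>. \<omega> \<in> space M \<Longrightarrow> 0 < \<tau> \<omega>"
    and bound: "\<And>\<omega> x y u w v. \<omega> \<in> space M \<Longrightarrow> x \<in> closure (interior (N \<omega>) - L \<omega>)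
      \<Longrightarrow> y \<in> closure (interior (N \<omega>) - L \<omega>) \<Longrightarrow> u \<in> N (\<theta> \<omega>)
      \<Longrightarrow> w \<in> closure UNIV \<Longrightarrow> v \<in> closure (- N (\<theta> \<omega>))
      \<Longrightarrow> \<tau> \<omega> \<le> dist (\<phi> \<omega> x) u + dist (\<phi> (\<theta> \<omega>) u) w + dist (\<phi> \<omega> y) v + dist x y"
    using phi_two_step_margin[OF random_open_Diff[OF random_open_N(1) L] compact random_open_UNIV
        random_open_N(4) stays] by blast
  have [measurable]: "\<tau> \<in> borel_measurable M" by (rule \<tau>(1))
  show thesis
  proof (rule that[OF \<tau>])
    fix \<omega> g0 x
    assume \<omega>: "\<omega> \<in> space M" and close0: "\<forall>x\<in>N \<omega>. dist (\<phi> \<omega> x) (g0 x) < \<tau> \<omega>"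
      and x: "x \<in> closure (N \<omega> - L \<omega>)"
    show "g0 x \<in> interior (N (\<theta> \<omega>))"
    proof (rule ccontr)
      assume "g0 x \<notin> interior (N (\<theta> \<omega>))"
      moreover have "\<phi> \<omega> x \<in> N (\<theta> \<omega>)"
        using closure_Diff_maps_into_interior[OF \<omega> x] interior_subset by blast
      ultimately have "\<tau> \<omega> \<le> dist (\<phi> \<omega> x) (\<phi> \<omega> x) + dist (\<phi> (\<theta> \<omega>) (\<phi> \<omega> x)) (\<phi> (\<theta> \<omega>) (\<phi> \<omega> x))
          + dist (\<phi> \<omega> x) (g0 x) + dist x x"
        by (intro bound) (use \<omega> x \<open>\<phi> \<omega> x \<in> N (\<theta> \<omega>)\<close> \<open>g0 x \<notin> interior (N (\<theta> \<omega>))\<close> in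
            \<open>simp_all add: K closure_complement\<close>)
      then have "\<tau> \<omega> \<le> dist (\<phi> \<omega> x) (g0 x)" by simp
      moreover have "dist (\<phi> \<omega> x) (g0 x) < \<tau> \<omega>"
        using close0 closure_Diff_subset_N[OF \<omega>] x by blast
      ultimately show False by linarith
    qed
  qed
qed

lemma separation_robust:
  obtains \<tau> where "\<tau> \<in> borel_measurable M" "\<And>\<omega>. \<omega> \<in> space M \<Longrightarrow> 0 < \<tau> \<omega>"
    "\<And>\<omega> g0 x. \<omega> \<in> space M \<Longrightarrow> \<forall>x\<in>N \<omega>. dist (\<phi> \<omega> x) (g0 x) < \<tau> \<omega>
      \<Longrightarrow> x \<in> L \<omega> \<Longrightarrow> g0 x \<notin> closure (N (\<theta> \<omega>) - L (\<theta> \<omega>))"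
proof -
  have K1: "closure (interior (N (\<theta> \<omega>)) - L (\<theta> \<omega>)) = closure (N (\<theta> \<omega>) - L (\<theta> \<omega>))"
    if "\<omega> \<in> space M" for \<omega>
    using closure_interior_Diff[OF sym[OF closure_interior_N[OF mds_theta_in_space[OF mds that]]]]
      L mds_theta_in_space[OF mds that]
    unfolding random_compact_def by (simp add: compact_imp_closed)
  have V: "random_open M (\<lambda>\<omega>. interior (N (\<theta> \<omega>)) - L (\<theta> \<omega>))"
    by (rule random_open_compose[OF random_open_Diff[OF random_open_N(1) L] measurable_mds_theta[OF mds]])
  have compact: "compact (closure (interior (L \<omega>)))" if "\<omega> \<in> space M" for \<omega>
    using L that unfolding closure_interior_L[OF that] random_compact_def by blast
  have stays: "\<phi> \<omega> x \<notin> closure (interior (N (\<theta> \<omega>)) - L (\<theta> \<omega>))"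
    if "\<omega> \<in> space M" "x \<in> closure (interior (L \<omega>))" for \<omega> x
    using L_image_disjoint[of \<omega> x] that K1 closure_interior_L by simp
  obtain \<tau> where \<tau>: "\<tau> \<in> borel_measurable M" "\<And>\<omega>. \<omega> \<in> space M \<Longrightarrow> 0 < \<tau> \<omega>"
    and bound: "\<And>\<omega> x y u w v. \<omega> \<in> space M \<Longrightarrow> x \<in> closure (interior (L \<omega>))
      \<Longrightarrow> y \<in> closure (interior (L \<omega>)) \<Longrightarrow> u \<in> N (\<theta> \<omega>)
      \<Longrightarrow> w \<in> closure UNIV \<Longrightarrow> v \<in> closure (interior (N (\<theta> \<omega>)) - L (\<theta> \<omega>))
      \<Longrightarrow> \<tau> \<omega> \<le> dist (\<phi> \<omega> x) u + dist (\<phi> (\<theta> \<omega>) u) w + dist (\<phi> \<omega> y) v + dist x y"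
    using phi_two_step_margin[OF random_open_interior[OF L] compact random_open_UNIV V stays] by blast
  show thesis
  proof (rule that[of "\<lambda>\<omega>. \<tau> \<omega> / 2"])
    have [measurable]: "\<tau> \<in> borel_measurable M" by (rule \<tau>(1))
    show "(\<lambda>\<omega>. \<tau> \<omega> / 2) \<in> borel_measurable M" by measurable
    show "0 < \<tau> \<omega> / 2" if "\<omega> \<in> space M" for \<omega> using \<tau>(2)[OF that] by simp
    fix \<omega> g0 x
    assume \<omega>: "\<omega> \<in> space M" and close0: "\<forall>x\<in>N \<omega>. dist (\<phi> \<omega> x) (g0 x) < \<tau> \<omega> / 2"
      and x: "x \<in> L \<omega>"
    show "g0 x \<notin> closure (N (\<theta> \<omega>) - L (\<theta> \<omega>))"
    proof
      assume g0x: "g0 x \<in> closure (N (\<theta> \<omega>) - L (\<theta> \<omega>))"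
      then have "g0 x \<in> N (\<theta> \<omega>)" using closure_Diff_subset_N[OF mds_theta_in_space[OF mds \<omega>]] by blast
      then have "\<tau> \<omega> \<le> dist (\<phi> \<omega> x) (g0 x) + dist (\<phi> (\<theta> \<omega>) (g0 x)) (\<phi> (\<theta> \<omega>) (g0 x))
          + dist (\<phi> \<omega> x) (g0 x) + dist x x"
        by (intro bound) (simp_all add: \<omega> x g0x \<open>g0 x \<in> N (\<theta> \<omega>)\<close> K1 closure_interior_L)
      then have "\<tau> \<omega> \<le> 2 * dist (\<phi> \<omega> x) (g0 x)" by simp
      moreover have "dist (\<phi> \<omega> x) (g0 x) < \<tau> \<omega> / 2" using close0 L_subset_N[OF \<omega>] x by blast
      ultimately show False by linarith
    qed
  qed
qed

lemma filtration_step_robust: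
  obtains \<tau> where "\<tau> \<in> borel_measurable M" "\<And>\<omega>. \<omega> \<in> space M \<Longrightarrow> 0 < \<tau> \<omega>"
    "\<And>\<omega> g0 g1. \<omega> \<in> space M \<Longrightarrow> \<forall>x\<in>N \<omega>. dist (\<phi> \<omega> x) (g0 x) < \<tau> \<omega>
      \<Longrightarrow> \<forall>x\<in>N (\<theta> \<omega>). dist (\<phi> (\<theta> \<omega>) x) (g1 x) < \<tau> \<omega>
      \<Longrightarrow> filtration_step g0 g1 (N \<omega>) (L \<omega>) (N (\<theta> \<omega>)) (L (\<theta> \<omega>)) (N (\<theta> (\<theta> \<omega>)))"
proof -
  obtain \<tau>1 where \<tau>1: "\<tau>1 \<in> borel_measurable M" "\<And>\<omega>. \<omega> \<in> space M \<Longrightarrow> 0 < \<tau>1 \<omega>"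
    "\<And>\<omega> g0 g1 x. \<omega> \<in> space M \<Longrightarrow> \<forall>x\<in>N \<omega>. dist (\<phi> \<omega> x) (g0 x) < \<tau>1 \<omega>
      \<Longrightarrow> \<forall>x\<in>N (\<theta> \<omega>). dist (\<phi> (\<theta> \<omega>) x) (g1 x) < \<tau>1 \<omega>
      \<Longrightarrow> x \<in> N \<omega> \<Longrightarrow> g0 x \<in> N (\<theta> \<omega>) \<Longrightarrow> g1 (g0 x) \<in> N (\<theta> (\<theta> \<omega>))
      \<Longrightarrow> g0 x \<in> interior (N (\<theta> \<omega>))"
    using block_robust by blast
  obtain \<tau>2 where \<tau>2: "\<tau>2 \<in> borel_measurable M" "\<And>\<omega>. \<omega> \<in> space M \<Longrightarrow> 0 < \<tau>2 \<omega>"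
    "\<And>\<omega> g0 g1 x. \<omega> \<in> space M \<Longrightarrow> \<forall>x\<in>N \<omega>. dist (\<phi> \<omega> x) (g0 x) < \<tau>2 \<omega>
      \<Longrightarrow> \<forall>x\<in>N (\<theta> \<omega>). dist (\<phi> (\<theta> \<omega>) x) (g1 x) < \<tau>2 \<omega>
      \<Longrightarrow> x \<in> L \<omega> \<Longrightarrow> g0 x \<in> N (\<theta> \<omega>) \<Longrightarrow> g1 (g0 x) \<notin> N (\<theta> (\<theta> \<omega>))"
    using avoid_robust by blast
  obtain \<tau>3 where \<tau>3: "\<tau>3 \<in> borel_measurable M" "\<And>\<omega>. \<omega> \<in> space M \<Longrightarrow> 0 < \<tau>3 \<omega>"
    "\<And>\<omega> g0 x. \<omega> \<in> space M \<Longrightarrow> \<forall>x\<in>N \<omega>. dist (\<phi> \<omega> x) (g0 x) < \<tau>3 \<omega>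
      \<Longrightarrow> x \<in> closure (N \<omega> - L \<omega>) \<Longrightarrow> g0 x \<in> interior (N (\<theta> \<omega>))"
    using inward_robust by blast
  obtain \<tau>4 where \<tau>4: "\<tau>4 \<in> borel_measurable M" "\<And>\<omega>. \<omega> \<in> space M \<Longrightarrow> 0 < \<tau>4 \<omega>"
    "\<And>\<omega> g0 x. \<omega> \<in> space M \<Longrightarrow> \<forall>x\<in>N \<omega>. dist (\<phi> \<omega> x) (g0 x) < \<tau>4 \<omega>
      \<Longrightarrow> x \<in> L \<omega> \<Longrightarrow> g0 x \<notin> closure (N (\<theta> \<omega>) - L (\<theta> \<omega>))"
    using separation_robust by blast
  define \<tau> where "\<tau> \<omega> = min (min (\<tau>1 \<omega>) (\<tau>2 \<omega>)) (min (\<tau>3 \<omega>) (\<tau>4 \<omega>))" for \<omega>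
  have [measurable]: "\<tau>1 \<in> borel_measurable M" "\<tau>2 \<in> borel_measurable M"
    "\<tau>3 \<in> borel_measurable M" "\<tau>4 \<in> borel_measurable M"
    using \<tau>1(1) \<tau>2(1) \<tau>3(1) \<tau>4(1) .
  show thesis
  proof (rule that[of \<tau>])
    show "\<tau> \<in> borel_measurable M" unfolding \<tau>_def by measurable
    show "0 < \<tau> \<omega>" if "\<omega> \<in> space M" for \<omega>
      using \<tau>1(2) \<tau>2(2) \<tau>3(2) \<tau>4(2) that unfolding \<tau>_def by simp
    fix \<omega> g0 g1
    assume \<omega>: "\<omega> \<in> space M" and close0: "\<forall>x\<in>N \<omega>. dist (\<phi> \<omega> x) (g0 x) < \<tau> \<omega>"
      and close1: "\<forall>x\<in>N (\<theta> \<omega>). dist (\<phi> (\<theta> \<omega>) x) (g1 x) < \<tau> \<omega>"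
    have weaken: "\<forall>x\<in>A. d x < t" if "\<forall>x\<in>A. d x < \<tau> \<omega>" "\<tau> \<omega> \<le> t" for A and d :: "'x \<Rightarrow> real" and t
      using that by force
    have "\<tau> \<omega> \<le> \<tau>1 \<omega>" "\<tau> \<omega> \<le> \<tau>2 \<omega>" "\<tau> \<omega> \<le> \<tau>3 \<omega>" "\<tau> \<omega> \<le> \<tau>4 \<omega>" unfolding \<tau>_def by simp_all
    note close = this[THEN weaken[OF close0]] this(1,2)[THEN weaken[OF close1]]
    show "filtration_step g0 g1 (N \<omega>) (L \<omega>) (N (\<theta> \<omega>)) (L (\<theta> \<omega>)) (N (\<theta> (\<theta> \<omega>)))"
      unfolding filtration_step_def
      using \<tau>1(3)[OF \<omega> close(1) close(5)] \<tau>2(3)[OF \<omega> close(2) close(6)] \<tau>3(3)[OF \<omega> close(3)]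
        \<tau>4(3)[OF \<omega> close(4)] by blast
  qed
qed

lemma perturbed_filtration_pair:
  "\<exists>\<delta>. \<delta> \<in> borel_measurable M \<and> (\<forall>\<omega>\<in>space M. \<delta> \<omega> > 0) \<and>
    (\<forall>\<psi>. random_homeo M \<psi> \<and> (\<forall>\<omega>\<in>space M. dN M \<theta> N \<phi> \<psi> \<omega> < \<delta> \<omega>)
      \<longrightarrow> random_isol_inv_set M \<theta> \<psi> (Inv M \<theta> \<psi> (\<lambda>\<omega>. N \<omega> - L \<omega>))
        \<and> filtration_pair M \<theta> \<psi> N L (Inv M \<theta> \<psi> (\<lambda>\<omega>. N \<omega> - L \<omega>)))"
proof -
  obtain \<tau> where \<tau>: "\<tau> \<in> borel_measurable M" "\<And>\<omega>. \<omega> \<in> space M \<Longrightarrow> 0 < \<tau> \<omega>"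
    "\<And>\<omega> g0 g1. \<omega> \<in> space M \<Longrightarrow> \<forall>x\<in>N \<omega>. dist (\<phi> \<omega> x) (g0 x) < \<tau> \<omega>
      \<Longrightarrow> \<forall>x\<in>N (\<theta> \<omega>). dist (\<phi> (\<theta> \<omega>) x) (g1 x) < \<tau> \<omega>
      \<Longrightarrow> filtration_step g0 g1 (N \<omega>) (L \<omega>) (N (\<theta> \<omega>)) (L (\<theta> \<omega>)) (N (\<theta> (\<theta> \<omega>)))"
    using filtration_step_robust by blast
  obtain \<delta> where \<delta>: "\<delta> \<in> borel_measurable M" "\<And>\<omega>. \<omega> \<in> space M \<Longrightarrow> 0 < \<delta> \<omega>"
    "\<And>\<psi> \<omega>. random_homeo M \<psi> \<Longrightarrow> \<forall>\<omega>\<in>space M. dN M \<theta> N \<phi> \<psi> \<omega> < \<delta> \<omega> \<Longrightarrow> \<omega> \<in> space M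
      \<Longrightarrow> (\<forall>x\<in>N \<omega>. dist (\<phi> \<omega> x) (\<psi> \<omega> x) < \<tau> \<omega>)
        \<and> (\<forall>x\<in>N (\<theta> \<omega>). dist (\<phi> (\<theta> \<omega>) x) (\<psi> (\<theta> \<omega>) x) < \<tau> \<omega>)"
    using dN_control[OF \<tau>(1,2)] by blast
  have "\<forall>\<psi>. random_homeo M \<psi> \<and> (\<forall>\<omega>\<in>space M. dN M \<theta> N \<phi> \<psi> \<omega> < \<delta> \<omega>)
      \<longrightarrow> random_isol_inv_set M \<theta> \<psi> (Inv M \<theta> \<psi> (\<lambda>\<omega>. N \<omega> - L \<omega>))
        \<and> filtration_pair M \<theta> \<psi> N L (Inv M \<theta> \<psi> (\<lambda>\<omega>. N \<omega> - L \<omega>))"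
  proof (intro allI impI)
    fix \<psi> assume "random_homeo M \<psi> \<and> (\<forall>\<omega>\<in>space M. dN M \<theta> N \<phi> \<psi> \<omega> < \<delta> \<omega>)"
    then have \<psi>: "random_homeo M \<psi>" and close: "\<forall>\<omega>\<in>space M. dN M \<theta> N \<phi> \<psi> \<omega> < \<delta> \<omega>" by blast+
    have step: "filtration_step (\<psi> \<omega>) (\<psi> (\<theta> \<omega>)) (N \<omega>) (L \<omega>) (N (\<theta> \<omega>)) (L (\<theta> \<omega>)) (N (\<theta> (\<theta> \<omega>)))"
      if "\<omega> \<in> space M" for \<omega>
      using \<tau>(3)[OF that] \<delta>(3)[OF \<psi> close that] by blast
    have L_sub: "\<forall>\<omega>\<in>space M. L \<omega> \<subseteq> N \<omega>" using L_subset_N by blast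
    note criterion = filtration_pair_criterion[OF mds \<psi> random_compact_N L regular_N_L L_sub step]
    show "random_isol_inv_set M \<theta> \<psi> (Inv M \<theta> \<psi> (\<lambda>\<omega>. N \<omega> - L \<omega>))
      \<and> filtration_pair M \<theta> \<psi> N L (Inv M \<theta> \<psi> (\<lambda>\<omega>. N \<omega> - L \<omega>))"
      using criterion(2,3) by (rule conjI[rotated])
  qed
  then show ?thesis using \<delta>(1,2) by blast
qed

end

end

theorem mainTheorem5:
  fixes M :: "'w measure" and \<theta> :: "'w \<Rightarrow> 'w"
    and \<phi> :: "'w \<Rightarrow> 'x::polish_space \<Rightarrow> 'x" and N :: "'w \<Rightarrow> 'x set"
  assumes "mds M \<theta>"
    and "locally_compact_space (euclidean :: 'x topology)"
    and "random_homeo M \<phi>"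
    and "random_isol_block M \<theta> \<phi> N"
    and "\<forall>\<omega>\<in>space M. N \<omega> = closure (interior (N \<omega>))"
  shows "\<exists>\<epsilon>. \<epsilon> \<in> borel_measurable M \<and> (\<forall>\<omega>\<in>space M. \<epsilon> \<omega> > 0) \<and>
    (\<forall>L. random_compact M L \<and> rel_nbhd M L (exit_set \<theta> \<phi> N) N
         \<and> (\<forall>\<omega>\<in>space M. L \<omega> = closure (interior (L \<omega>)))
         \<and> (\<forall>\<omega>\<in>space M. \<forall>x\<in>L \<omega>. \<exists>y\<in>exit_set \<theta> \<phi> N \<omega>. dist x y < \<epsilon> \<omega>)
       \<longrightarrow> filtration_pair M \<theta> \<phi> N L (Inv M \<theta> \<phi> N)
         \<and> (\<exists>\<delta>. \<delta> \<in> borel_measurable M \<and> (\<forall>\<omega>\<in>space M. \<delta> \<omega> > 0) \<and>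
              (\<forall>\<psi>. random_homeo M \<psi> \<and> (\<forall>\<omega>\<in>space M. dN M \<theta> N \<phi> \<psi> \<omega> < \<delta> \<omega>)
                 \<longrightarrow> random_isol_inv_set M \<theta> \<psi> (Inv M \<theta> \<psi> (\<lambda>\<omega>. N \<omega> - L \<omega>))
                   \<and> filtration_pair M \<theta> \<psi> N L (Inv M \<theta> \<psi> (\<lambda>\<omega>. N \<omega> - L \<omega>)))))"
proof -
  note setting = assms(1,3,4,5)
  obtain \<epsilon> where \<epsilon>: "\<epsilon> \<in> borel_measurable M" "\<And>\<omega>. \<omega> \<in> space M \<Longrightarrow> 0 < \<epsilon> \<omega>"
    and separation: "\<And>\<omega> z y. \<omega> \<in> space M \<Longrightarrow> z \<in> N \<omega> \<Longrightarrow> \<phi> \<omega> z \<in> N (\<theta> \<omega>)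
      \<Longrightarrow> \<phi> (\<theta> \<omega>) (\<phi> \<omega> z) \<in> N (\<theta> (\<theta> \<omega>)) \<Longrightarrow> y \<in> exit_set \<theta> \<phi> N \<omega> \<Longrightarrow> \<epsilon> \<omega> \<le> dist z y"
    using exit_set_separation[OF setting] by blast
  show ?thesis
  proof (rule exI[of _ \<epsilon>], intro conjI ballI allI impI \<epsilon>)
    fix L
    assume "random_compact M L \<and> rel_nbhd M L (exit_set \<theta> \<phi> N) N
      \<and> (\<forall>\<omega>\<in>space M. L \<omega> = closure (interior (L \<omega>)))
      \<and> (\<forall>\<omega>\<in>space M. \<forall>x\<in>L \<omega>. \<exists>y\<in>exit_set \<theta> \<phi> N \<omega>. dist x y < \<epsilon> \<omega>)"
    then have L: "random_compact M L" "rel_nbhd M L (exit_set \<theta> \<phi> N) N"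
      "\<forall>\<omega>\<in>space M. L \<omega> = closure (interior (L \<omega>))"
      "\<forall>\<omega>\<in>space M. \<forall>x\<in>L \<omega>. \<exists>y\<in>exit_set \<theta> \<phi> N \<omega>. dist x y < \<epsilon> \<omega>"
      by blast+
    show "filtration_pair M \<theta> \<phi> N L (Inv M \<theta> \<phi> N)"
      by (rule filtration_pair_phi[OF setting]) (fact separation L)+
    show "\<exists>\<delta>. \<delta> \<in> borel_measurable M \<and> (\<forall>\<omega>\<in>space M. \<delta> \<omega> > 0) \<and>
      (\<forall>\<psi>. random_homeo M \<psi> \<and> (\<forall>\<omega>\<in>space M. dN M \<theta> N \<phi> \<psi> \<omega> < \<delta> \<omega>)
         \<longrightarrow> random_isol_inv_set M \<theta> \<psi> (Inv M \<theta> \<psi> (\<lambda>\<omega>. N \<omega> - L \<omega>))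
           \<and> filtration_pair M \<theta> \<psi> N L (Inv M \<theta> \<psi> (\<lambda>\<omega>. N \<omega> - L \<omega>)))"
      by (rule perturbed_filtration_pair[OF setting]) (fact separation L)+
  qed
qed

end
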